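(* Let $\theta_1,\theta_2>0$, $\theta=\theta_1+\theta_2$, $p=\theta_1/\theta$, and let $\{\xi(t)\}_{t\ge 0}$ be the Fleming–Viot process on $[0,1]$ with $\xi(0)=x$ and generator \[ \mathcal{L}g(x)=x\big(g(1)-g(x)\big)+(1-x)\big(g(0)-g(x)\big)+\tfrac12(\theta_1-\theta x)g'(x),\qquad g\in C^2([0,1]). \] Let \[ p_{11}(t)=e^{-\theta t/2}+(1-e^{-\theta t/2})p,\quad p_{21}(t)=(1-e^{-\theta t/2})p, \] \[ q_1(t;x)=xe^{-\theta t/2}+(1-e^{-\theta t/2})p,\quad q_2(t;x)=1-q_1(t;x). \] Then \[ \xi(t)=\begin{cases} q_1(t;x) & \text{with probability } e^{-t},\\ p_{i1}(\tau),\ i=1,2, & \text{with probability } (1-e^{-t})\,q_i(t-\tau;x),\end{cases} \] where $\tau$ has the truncated exponential density $(1-e^{-t})^{-1}e^{-\tau}$, $0<\tau<t$. The continuous part of the distribution of $\xi(t)$ has density $f(\xi;x,t)$ equal to \[ \Big(p+e^{-\theta t/2}(x-p)\tfrac{1-p}{\xi-p}\Big)\frac{2}{\theta}\Big(\frac{\xi-p}{1-p}\Big)^{2/\theta-1}\frac{1}{1-p}\quad\text{for } \xi>p+(1-p)e^{-\theta t/2}, \] \[ \Big(1-p-e^{-\theta t/2}(x-p)\big(1-\tfrac{\xi}{p}\big)^{-1}\Big)\frac{2}{\theta}\Big(1-\frac{\xi}{p}\Big)^{2/\theta-1}\frac1p\quad\text{for } \xi<p(1-e^{-\theta t/2}),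 \] and zero for $p(1-e^{-\theta t/2})<\xi<p+(1-p)e^{-\theta t/2}$. The stationary density of $\{\xi(t)\}$ is \[ f(\xi)=\lim_{t\to\infty}f(\xi;x,t)=\begin{cases} p\,\frac{2}{\theta}\Big(\frac{\xi-p}{1-p}\Big)^{2/\theta-1}\frac{1}{1-p}, & \xi>p,\\[4pt] (1-p)\,\frac{2}{\theta}\Big(1-\frac{\xi}{p}\Big)^{2/\theta-1}\frac1p, & \xi<p.\end{cases} \]
   Context: This is the star-shaped $\Lambda$-Fleming–Viot process ($\Lambda$ a unit atom at $1$) with two types and mutation: $\xi(t)$ is the frequency of type 1 at time $t$; at rate 1 the whole population is replaced by the offspring of a single individual chosen at random (type 1 with probability equal to the current type-1 frequency); mutation occurs along lines at rate $\theta/2$, the new type being type 1 with probability $p$. Here $p_{i1}(t)$ is the probability that a single line of type $i$ is of type 1 after time $t$, and $q_i(t;x)$ the probability that a single individual at time $t$ is of type $i$ given no replacement in $(0,t)$. *)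

theory Defs
  imports "HOL-Probability.Probability"
begin

definition fv_theta :: "real \<Rightarrow> real \<Rightarrow> real" where
  "fv_theta \<theta>1 \<theta>2 = \<theta>1 + \<theta>2"

definition fv_p :: "real \<Rightarrow> real \<Rightarrow> real" where
  "fv_p \<theta>1 \<theta>2 = \<theta>1 / fv_theta \<theta>1 \<theta>2"

definition fv_gen :: "real \<Rightarrow> real \<Rightarrow> (real \<Rightarrow> real) \<Rightarrow> (real \<Rightarrow> real) \<Rightarrow> real \<Rightarrow> real" where
  "fv_gen \<theta>1 \<theta>2 g dg y =
     y * (g 1 - g y) + (1 - y) * (g 0 - g y) + (\<theta>1 - fv_theta \<theta>1 \<theta>2 * y) / 2 * dg y"

text \<open>Kolmogorov forward equation for a family of one-dimensional marginal laws P t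
  (t \<ge> 0) of a process with generator fv_gen, tested against all C^2 functions.\<close>
definition fv_evolution :: "real \<Rightarrow> real \<Rightarrow> (real \<Rightarrow> real measure) \<Rightarrow> bool" where
  "fv_evolution \<theta>1 \<theta>2 P \<longleftrightarrow>
     (\<forall>t\<ge>0. sets (P t) = sets borel \<and> prob_space (P t) \<and> emeasure (P t) {0..1} = 1) \<and>
     (\<forall>g dg d2g. (\<forall>y. (g has_real_derivative dg y) (at y)) \<and>
                 (\<forall>y. (dg has_real_derivative d2g y) (at y)) \<and> continuous_on UNIV d2g \<longrightarrow>
        (\<forall>t\<ge>0. ((\<lambda>s. \<integral>y. g y \<partial>P s) has_real_derivative
                    (\<integral>y. fv_gen \<theta>1 \<theta>2 g dg y \<partial>P t)) (at t within {0..})))"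

definition fv_law :: "real \<Rightarrow> real \<Rightarrow> real \<Rightarrow> (real \<Rightarrow> real measure) \<Rightarrow> bool" where
  "fv_law \<theta>1 \<theta>2 x P \<longleftrightarrow> P 0 = return borel x \<and> fv_evolution \<theta>1 \<theta>2 P"

definition fv_p11 :: "real \<Rightarrow> real \<Rightarrow> real \<Rightarrow> real" where
  "fv_p11 \<theta>1 \<theta>2 t = exp (- fv_theta \<theta>1 \<theta>2 * t / 2)
      + (1 - exp (- fv_theta \<theta>1 \<theta>2 * t / 2)) * fv_p \<theta>1 \<theta>2"

definition fv_p21 :: "real \<Rightarrow> real \<Rightarrow> real \<Rightarrow> real" where
  "fv_p21 \<theta>1 \<theta>2 t = (1 - exp (- fv_theta \<theta>1 \<theta>2 * t / 2)) * fv_p \<theta>1 \<theta>2"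

definition fv_q1 :: "real \<Rightarrow> real \<Rightarrow> real \<Rightarrow> real \<Rightarrow> real" where
  "fv_q1 \<theta>1 \<theta>2 t x = x * exp (- fv_theta \<theta>1 \<theta>2 * t / 2)
      + (1 - exp (- fv_theta \<theta>1 \<theta>2 * t / 2)) * fv_p \<theta>1 \<theta>2"

definition fv_q2 :: "real \<Rightarrow> real \<Rightarrow> real \<Rightarrow> real \<Rightarrow> real" where
  "fv_q2 \<theta>1 \<theta>2 t x = 1 - fv_q1 \<theta>1 \<theta>2 t x"

text \<open>The factors (1 - e^{-t}) cancel.\<close>
definition fv_mix :: "real \<Rightarrow> real \<Rightarrow> real \<Rightarrow> real \<Rightarrow> real set \<Rightarrow> real" where
  "fv_mix \<theta>1 \<theta>2 x t A =
     exp (- t) * indicator A (fv_q1 \<theta>1 \<theta>2 t x)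
     + (LBINT \<tau>:{0<..<t}. exp (- \<tau>) *
          (fv_q1 \<theta>1 \<theta>2 (t - \<tau>) x * indicator A (fv_p11 \<theta>1 \<theta>2 \<tau>)
           + fv_q2 \<theta>1 \<theta>2 (t - \<tau>) x * indicator A (fv_p21 \<theta>1 \<theta>2 \<tau>)))"

definition fv_dens :: "real \<Rightarrow> real \<Rightarrow> real \<Rightarrow> real \<Rightarrow> real \<Rightarrow> real" where
  "fv_dens \<theta>1 \<theta>2 x t \<xi> =
     (let \<theta> = fv_theta \<theta>1 \<theta>2; p = fv_p \<theta>1 \<theta>2; a = exp (- \<theta> * t / 2) in
      if \<xi> < 0 \<or> \<xi> > 1 then 0
      else if \<xi> > p + (1 - p) * a then
        (p + a * (x - p) * ((1 - p) / (\<xi> - p))) * (2 / \<theta>)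
          * ((\<xi> - p) / (1 - p)) powr (2 / \<theta> - 1) * (1 / (1 - p))
      else if \<xi> < p * (1 - a) then
        (1 - p - a * (x - p) * inverse (1 - \<xi> / p)) * (2 / \<theta>)
          * (1 - \<xi> / p) powr (2 / \<theta> - 1) * (1 / p)
      else 0)"

definition fv_stat :: "real \<Rightarrow> real \<Rightarrow> real \<Rightarrow> real" where
  "fv_stat \<theta>1 \<theta>2 \<xi> =
     (let \<theta> = fv_theta \<theta>1 \<theta>2; p = fv_p \<theta>1 \<theta>2 in
      if \<xi> < 0 \<or> \<xi> > 1 then 0
      else if \<xi> > p then p * (2 / \<theta>) * ((\<xi> - p) / (1 - p)) powr (2 / \<theta> - 1) * (1 / (1 - p))
      else if \<xi> < p then (1 - p) * (2 / \<theta>) * (1 - \<xi> / p) powr (2 / \<theta> - 1) * (1 / p)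
      else 0)"

end

theory Submission
  imports Defs
begin

text \<open>Looking back from time t, the last total replacement happened at an Exp(1) time \<tau> before t
  (or never, with probability e^{-t}); it gave every line the type of one individual, of type 1 with
  probability q1(t - \<tau>; x), after which the frequency relaxes along the mutation flow
  y' = \<theta> (p - y) / 2 to p11(\<tau>) or p21(\<tau>).  This mixture is realised explicitly and shown to
  solve the forward equation: along the flow e^{-\<tau>} g(y_\<tau>) changes at the rate Lg - \<ell>g, where
  \<ell>g is the chord of g through (0, g 0) and (1, g 1), and the mean of the mixture follows the
  flow, which disposes of the \<ell>g terms.  Conversely the moments of any solution satisfy a
  triangular system of linear ODEs, and a law on [0,1] is determined by its moments.  The density
  comes from the substitutions \<xi> = p11(\<tau>) and \<xi> = p21(\<tau>); started at x = p the law is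
  e^{-t} \<delta>_p plus the stationary density on a set exhausting [0,1] - {p}, which gives the
  stationary statements.\<close>

lemma abs_mult_unit_interval_le:
  fixes a b c B :: real
  assumes "a \<in> {0..1}" "b \<in> {0..1}" "\<bar>c\<bar> \<le> B"
  shows "\<bar>a * (b * c)\<bar> \<le> B"
proof -
  have "\<bar>a * (b * c)\<bar> = a * (b * \<bar>c\<bar>)" using assms by (simp add: abs_mult)
  also have "\<dots> \<le> 1 * (1 * B)" using assms
    by (intro mult_mono) (auto intro: order.trans[OF abs_ge_zero])
  finally show ?thesis by simp
qed

lemma integrable_indicator_times_bounded:
  fixes g :: "real \<Rightarrow> real"
  assumes S: "S \<in> sets borel" "emeasure lborel S < \<infinity>"
    and g[measurable]: "g \<in> borel_measurable borel" and B: "\<And>u. u \<in> S \<Longrightarrow> \<bar>g u\<bar> \<le> B"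
  shows "integrable lborel (\<lambda>u. indicator S u * g u)"
proof (rule Bochner_Integration.integrable_bound)
  show "integrable lborel (\<lambda>u. B * indicator S u)"
    using S by (intro integrable_mult_right) (simp add: integrable_indicator_iff)
  show "(\<lambda>u. indicator S u * g u) \<in> borel_measurable lborel" using S(1) by measurable
  show "AE u in lborel. norm (indicator S u * g u) \<le> norm (B * indicat_real S u)"
    using B by (auto simp: indicator_def abs_mult intro: order.trans[OF _ abs_ge_self])
qed

lemma set_integral_exp_neg:
  fixes t :: real
  assumes "t \<ge> 0"
  shows "(LBINT \<tau>:{0<..<t}. exp (- \<tau>)) = 1 - exp (- t)"
proof -
  have "(LBINT \<tau>=ereal 0..ereal t. exp (- \<tau>)) = (- exp (- t)) - (- exp (- 0))"
    by (rule interval_integral_FTC_finite)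
       (auto intro!: continuous_intros derivative_eq_intros
         simp: has_real_derivative_iff_has_vector_derivative[symmetric])
  then show ?thesis using assms by (simp add: interval_integral_Ioo)
qed

lemma interval_integral_add_continuous:
  fixes f g :: "real \<Rightarrow> real"
  assumes "a \<le> b" "continuous_on {a..b} f" "continuous_on {a..b} g"
  shows "(LBINT x=ereal a..ereal b. f x + g x)
       = (LBINT x=ereal a..ereal b. f x) + (LBINT x=ereal a..ereal b. g x)"
  using assms by (intro interval_lebesgue_integral_add(2) interval_integrable_continuous_on)

lemma interval_integral_FTC_real:
  fixes f F :: "real \<Rightarrow> real"
  assumes "a \<le> b" "continuous_on {a..b} f"
    and "\<And>x. a \<le> x \<Longrightarrow> x \<le> b \<Longrightarrow> (F has_real_derivative f x) (at x within {a..b})"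
  shows "(LBINT x=ereal a..ereal b. f x) = F b - F a"
  using assms
  by (intro interval_integral_FTC_finite) (auto simp: has_real_derivative_iff_has_vector_derivative)

lemma has_real_derivative_within_Ici:
  fixes f :: "real \<Rightarrow> real"
  assumes "(f has_real_derivative D) (at t within {a..b})" "a \<le> t" "t < b"
  shows "(f has_real_derivative D) (at t within {a..})"
proof -
  have "at t within {a..b} = at t within {a..}"
    by (rule at_within_nhd[where S="{t - 1<..<b}"]) (use assms(2,3) in auto)
  then show ?thesis using assms(1) by simp
qed

lemma deriv_linear_imp_zero:
  fixes f :: "real \<Rightarrow> real"
  assumes deriv: "\<And>s. s \<ge> 0 \<Longrightarrow> (f has_real_derivative l * f s) (at s within {0..})"
    and f0: "f 0 = 0" and t: "t \<ge> 0"
  shows "f t = 0"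
proof -
  have "\<exists>c. \<forall>s\<in>{0..}. exp (- l * s) * f s = c"
  proof (rule has_field_derivative_zero_constant)
    fix s :: real assume "s \<in> {0..}"
    then have "((\<lambda>s. exp (- l * s) * f s) has_real_derivative
        exp (- l * s) * (- l) * f s + l * f s * exp (- l * s)) (at s within {0..})"
      by (intro DERIV_mult deriv) (auto intro!: derivative_eq_intros)
    then show "((\<lambda>s. exp (- l * s) * f s) has_real_derivative 0) (at s within {0..})"
      by (simp add: algebra_simps)
  qed (rule convex_real_interval)
  then obtain c where c: "\<And>s. s \<ge> 0 \<Longrightarrow> exp (- l * s) * f s = c" by auto
  show ?thesis using c[OF t] c[of 0] f0 by simp
qed

lemma exp_neg_real_tendsto_0: "(\<lambda>n. exp (- real n)) \<longlonglongrightarrow> 0"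
proof -
  have "LIM n sequentially. - real n :> at_bot"
    unfolding filterlim_uminus_at_bot by (simp add: filterlim_real_sequentially)
  then show ?thesis by (rule filterlim_compose[OF exp_at_bot])
qed

lemma continuous_bounded_on_unit_interval:
  fixes h :: "real \<Rightarrow> real"
  assumes "continuous_on UNIV h"
  obtains B where "\<And>v. v \<in> {0..1} \<Longrightarrow> \<bar>h v\<bar> \<le> B"
  using continuous_on_compact_bound[OF compact_Icc continuous_on_subset[OF assms subset_UNIV]]
  by (metis real_norm_def)

section \<open>Laws on the unit interval\<close>

definition unit_interval_law :: "real measure \<Rightarrow> bool" where
  "unit_interval_law Q \<longleftrightarrow> prob_space Q \<and> sets Q = sets borel \<and> emeasure Q {0..1} = 1"

lemma unit_interval_law_AE:
  assumes "unit_interval_law Q"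
  shows "AE y in Q. y \<in> {0..1}"
proof -
  interpret prob_space Q using assms by (simp add: unit_interval_law_def)
  show ?thesis using assms by (subst AE_prob_1) (auto simp: unit_interval_law_def emeasure_eq_measure)
qed

lemma unit_interval_law_integrable:
  fixes f :: "real \<Rightarrow> real"
  assumes Q: "unit_interval_law Q" and f: "continuous_on UNIV f"
  shows "integrable Q f"
proof -
  interpret prob_space Q using Q by (simp add: unit_interval_law_def)
  obtain B where B: "\<And>v. v \<in> {0..1} \<Longrightarrow> norm (f v) \<le> B"
    using continuous_on_compact_bound[OF compact_Icc continuous_on_subset[OF f subset_UNIV]] by blast
  have "sets Q = sets borel" using Q by (simp add: unit_interval_law_def)
  then have "f \<in> borel_measurable Q"
    by (subst measurable_cong_sets[OF _ refl]) (auto intro: borel_measurable_continuous_onI f)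
  moreover have "AE y in Q. norm (f y) \<le> B"
    using unit_interval_law_AE[OF Q] by (rule eventually_mono) (rule B)
  ultimately show ?thesis by (intro integrable_const_bound[where B=B])
qed

lemma unit_interval_law_abs_moment_le_1:
  assumes Q: "unit_interval_law Q"
  shows "(\<integral>y. \<bar>y\<bar> ^ n \<partial>Q) \<le> 1"
proof -
  interpret prob_space Q using Q by (simp add: unit_interval_law_def)
  have "(\<integral>y. \<bar>y\<bar> ^ n \<partial>Q) \<le> (\<integral>y. 1 \<partial>Q)"
    using unit_interval_law_AE[OF Q]
    by (intro integral_mono_AE unit_interval_law_integrable[OF Q])
       (auto intro!: continuous_intros power_le_one elim: eventually_mono)
  then show ?thesis by (simp add: prob_space)
qed

text \<open>Equal moments give equal characteristic functions because the Taylor remainder of the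
  characteristic function of a law on [0,1] is bounded by 2 |t|^n / n!.\<close>

lemma unit_interval_law_eqI_moments:
  assumes Q1: "unit_interval_law Q1" and Q2: "unit_interval_law Q2"
    and moments: "\<And>k. (\<integral>y. y ^ k \<partial>Q1) = (\<integral>y. y ^ k \<partial>Q2)"
  shows "Q1 = Q2"
proof -
  have distr: "real_distribution Q" if "unit_interval_law Q" for Q
    using that by (simp add: unit_interval_law_def real_distribution_def real_distribution_axioms_def)
  have approx: "cmod (char Q t - (\<Sum>k \<le> n. ((\<i> * t) ^ k / fact k) * complex_of_real (\<integral>y. y ^ k \<partial>Q)))
      \<le> 2 * \<bar>t\<bar> ^ n / fact n" if Q: "unit_interval_law Q" for Q t n
  proof -
    interpret real_distribution Q using distr[OF Q] .
    have "cmod (char Q t - (\<Sum>k \<le> n. ((\<i> * t) ^ k / fact k) * complex_of_real (\<integral>y. y ^ k \<partial>Q)))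
        \<le> (2 * \<bar>t\<bar> ^ n / fact n) * (\<integral>y. \<bar>y\<bar> ^ n \<partial>Q)"
      using char_approx1[of n t] unit_interval_law_integrable[OF Q] by (simp add: continuous_intros)
    also have "\<dots> \<le> 2 * \<bar>t\<bar> ^ n / fact n"
      using unit_interval_law_abs_moment_le_1[OF Q] by (intro mult_left_le) auto
    finally show ?thesis .
  qed
  have "char Q1 t = char Q2 t" for t
  proof -
    have "summable (\<lambda>n. \<bar>t\<bar> ^ n /\<^sub>R fact n)"
      using exp_converges[of "\<bar>t\<bar>"] by (rule sums_summable)
    then have "(\<lambda>n. 4 * (\<bar>t\<bar> ^ n / fact n)) \<longlonglongrightarrow> 4 * 0"
      by (intro tendsto_mult tendsto_const) (simp add: summable_LIMSEQ_zero divide_inverse mult.commute)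
    moreover have "cmod (char Q1 t - char Q2 t) \<le> 4 * (\<bar>t\<bar> ^ n / fact n)" for n
    proof -
      define S where "S = (\<Sum>k \<le> n. ((\<i> * t) ^ k / fact k) * complex_of_real (\<integral>y. y ^ k \<partial>Q1))"
      have "cmod (char Q1 t - char Q2 t) \<le> cmod (char Q1 t - S) + cmod (char Q2 t - S)"
        using norm_triangle_ineq4[of "char Q1 t - S" "char Q2 t - S"] by simp
      also have "\<dots> \<le> 2 * \<bar>t\<bar> ^ n / fact n + 2 * \<bar>t\<bar> ^ n / fact n"
        using approx[OF Q1, of t n] approx[OF Q2, of t n] unfolding S_def moments by (rule add_mono)
      finally show ?thesis by simp
    qed
    ultimately have "cmod (char Q1 t - char Q2 t) \<le> 0"
      by (intro LIMSEQ_le_const[of "\<lambda>n. 4 * (\<bar>t\<bar> ^ n / fact n)"]) auto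
    then show ?thesis by simp
  qed
  then show ?thesis by (intro Levy_uniqueness distr Q1 Q2 ext)
qed

section \<open>The mutation flow\<close>

definition chord :: "(real \<Rightarrow> real) \<Rightarrow> real \<Rightarrow> real" where
  "chord g y = y * g 1 + (1 - y) * g 0"

lemma chord_affine: "w * chord g y + (1 - w) * chord g z = chord g (w * y + (1 - w) * z)"
  unfolding chord_def by (simp add: algebra_simps)

lemma chord_measurable [measurable]: "chord g \<in> borel_measurable borel"
  unfolding chord_def by measurable

lemma continuous_on_chord: "continuous_on S (chord g)"
  unfolding chord_def by (intro continuous_intros)

locale fleming_viot =
  fixes \<theta>1 \<theta>2 :: real
  assumes theta1_pos: "\<theta>1 > 0" and theta2_pos: "\<theta>2 > 0"
begin

abbreviation "\<theta> \<equiv> fv_theta \<theta>1 \<theta>2"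
abbreviation "p \<equiv> fv_p \<theta>1 \<theta>2"
abbreviation "p11 \<equiv> fv_p11 \<theta>1 \<theta>2"
abbreviation "p21 \<equiv> fv_p21 \<theta>1 \<theta>2"
abbreviation "q1 \<equiv> fv_q1 \<theta>1 \<theta>2"
abbreviation "q2 \<equiv> fv_q2 \<theta>1 \<theta>2"
abbreviation "L \<equiv> fv_gen \<theta>1 \<theta>2"

definition decay :: "real \<Rightarrow> real" where
  "decay t = exp (- \<theta> * t / 2)"

lemma theta_pos: "\<theta> > 0"
  unfolding fv_theta_def using theta1_pos theta2_pos by simp

lemma p_pos: "p > 0"
  unfolding fv_p_def fv_theta_def using theta1_pos theta2_pos by simp

lemma p_less_1: "p < 1"
  unfolding fv_p_def fv_theta_def using theta1_pos theta2_pos by simp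

lemma decay_pos: "decay t > 0"
  unfolding decay_def by simp

lemma decay_neq_0 [simp]: "decay t \<noteq> 0"
  using decay_pos[of t] by simp

lemma decay_le_1: "t \<ge> 0 \<Longrightarrow> decay t \<le> 1"
  unfolding decay_def using theta_pos by simp

lemma decay_0 [simp]: "decay 0 = 1"
  unfolding decay_def by simp

lemma decay_diff: "decay (t - s) = decay t / decay s"
  unfolding decay_def by (simp add: exp_diff[symmetric] field_simps)

lemma decay_has_derivative: "(decay has_real_derivative - \<theta> / 2 * decay t) (at t within S)"
  unfolding decay_def by (auto intro!: derivative_eq_intros)

lemma continuous_on_decay: "continuous_on S decay"
  unfolding decay_def by (intro continuous_intros) auto

lemma decay_tendsto_0: "(decay \<longlongrightarrow> 0) at_top"
proof -
  have "LIM t at_top. \<theta> / 2 * t :> at_top"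
    using theta_pos by (intro filterlim_tendsto_pos_mult_at_top[OF tendsto_const _ filterlim_ident]) simp
  then have "LIM t at_top. - \<theta> * t / 2 :> at_bot"
    unfolding filterlim_uminus_at_bot by simp
  then show ?thesis
    unfolding decay_def[abs_def] by (rule filterlim_compose[OF exp_at_bot])
qed

lemma gen_eq_chord: "L g dg y = chord g y - g y + \<theta> * (p - y) / 2 * dg y"
proof -
  have "\<theta>1 - \<theta> * y = \<theta> * (p - y)" using theta_pos by (simp add: fv_p_def right_diff_distrib)
  then show ?thesis unfolding fv_gen_def chord_def by (simp add: algebra_simps)
qed

text \<open>q1 t y is the mutation flow y' = \<theta> (p - y) / 2 started at y; p11 and p21 are the flows
  started at 1 and 0.\<close>

lemma q1_eq: "q1 t y = p + (y - p) * decay t"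
  unfolding fv_q1_def decay_def by (simp add: algebra_simps)

lemma p11_eq_q1: "p11 t = q1 t 1"
  unfolding fv_p11_def fv_q1_def by simp

lemma p21_eq_q1: "p21 t = q1 t 0"
  unfolding fv_p21_def fv_q1_def by simp

lemma p11_eq: "p11 t = p + (1 - p) * decay t"
  unfolding p11_eq_q1 q1_eq ..

lemma p21_eq: "p21 t = p * (1 - decay t)"
  unfolding p21_eq_q1 q1_eq by (simp add: algebra_simps)

lemma q2_eq: "q2 t y = 1 - p - (y - p) * decay t"
  unfolding fv_q2_def q1_eq by simp

lemma q1_0 [simp]: "q1 0 y = y"
  unfolding q1_eq by simp

lemma q1_p [simp]: "q1 t p = p"
  unfolding q1_eq by simp

lemma q1_in_unit: "t \<ge> 0 \<Longrightarrow> y \<in> {0..1} \<Longrightarrow> q1 t y \<in> {0..1}"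
proof -
  assume t: "t \<ge> 0" and y: "y \<in> {0..1}"
  have e: "q1 t y = (1 - decay t) * p + decay t * y" unfolding q1_eq by (simp add: algebra_simps)
  have a: "0 \<le> decay t" "decay t \<le> 1" using decay_pos[of t] decay_le_1[OF t] by auto
  have "(1 - decay t) * p + decay t * y \<le> (1 - decay t) * 1 + decay t * 1"
    using a y p_less_1 by (intro add_mono mult_left_mono) auto
  with a y p_pos show ?thesis unfolding e by simp
qed

lemma q2_in_unit: "t \<ge> 0 \<Longrightarrow> y \<in> {0..1} \<Longrightarrow> q2 t y \<in> {0..1}"
  using q1_in_unit[of t y] unfolding fv_q2_def by auto

lemma p11_in_unit: "t \<ge> 0 \<Longrightarrow> p11 t \<in> {0..1}"
  unfolding p11_eq_q1 by (rule q1_in_unit) auto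

lemma p21_in_unit: "t \<ge> 0 \<Longrightarrow> p21 t \<in> {0..1}"
  unfolding p21_eq_q1 by (rule q1_in_unit) auto

lemma p_less_p11: "p < p11 t"
  unfolding p11_eq using p_less_1 decay_pos[of t] by simp

lemma p21_less_p: "p21 t < p"
  unfolding p21_eq using p_pos decay_pos[of t] by simp

lemma p11_tendsto_p: "(p11 \<longlongrightarrow> p) at_top"
  unfolding p11_eq[abs_def] by (auto intro!: tendsto_eq_intros decay_tendsto_0)

lemma p21_tendsto_p: "(p21 \<longlongrightarrow> p) at_top"
  unfolding p21_eq[abs_def] by (auto intro!: tendsto_eq_intros decay_tendsto_0)

lemma continuous_on_flow:
  assumes "continuous_on UNIV h"
  shows "continuous_on S (\<lambda>\<tau>. h (q1 \<tau> y))"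
  unfolding q1_eq by (rule continuous_on_compose2[OF assms]) (auto intro!: continuous_intros continuous_on_decay)

lemma q1_has_derivative: "((\<lambda>\<tau>. q1 \<tau> y) has_real_derivative \<theta> * (p - q1 \<tau> y) / 2) (at \<tau> within S)"
  unfolding q1_eq by (auto intro!: derivative_eq_intros decay_has_derivative simp: algebra_simps)

text \<open>Along the mutation flow, e^{-\<tau>} g(y_\<tau>) changes at the rate of the generator minus its
  replacement part, and the replacement part is the chord of g.\<close>

lemma flow_has_derivative:
  assumes g: "\<And>y. (g has_real_derivative dg y) (at y)"
  shows "((\<lambda>\<tau>. exp (- \<tau>) * g (q1 \<tau> y)) has_real_derivative
           exp (- \<tau>) * (L g dg (q1 \<tau> y) - chord g (q1 \<tau> y))) (at \<tau> within S)"
proof -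
  have "((\<lambda>\<tau>. g (q1 \<tau> y)) has_real_derivative dg (q1 \<tau> y) * (\<theta> * (p - q1 \<tau> y) / 2)) (at \<tau> within S)"
    by (rule DERIV_chain2[OF g q1_has_derivative])
  then show ?thesis
    by (auto intro!: derivative_eq_intros simp: gen_eq_chord algebra_simps)
qed

section \<open>The mixture law\<close>

text \<open>The mixture is realised as the image of a density on the real line: u \<in> (0,t) stands for a
  last replacement at time u before t followed by \<xi> = p11 u, u \<in> (-t,0) for one at time -u
  followed by \<xi> = p21 (-u), and [t, t+1] carries the atom q1 t x of mass e^{-t}.\<close>

definition mix_weight :: "real \<Rightarrow> real \<Rightarrow> real \<Rightarrow> real" where
  "mix_weight x t u =
     (if 0 < u \<and> u < t then exp (- u) * q1 (t - u) x
      else if - t < u \<and> u < 0 then exp u * q2 (t + u) x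
      else if t \<le> u \<and> u \<le> t + 1 then exp (- t) else 0)"

definition mix_atom :: "real \<Rightarrow> real \<Rightarrow> real \<Rightarrow> real" where
  "mix_atom x t u =
     (if 0 < u \<and> u < t then p11 u
      else if - t < u \<and> u < 0 then p21 (- u) else q1 t x)"

definition mix_law :: "real \<Rightarrow> real \<Rightarrow> real measure" where
  "mix_law x t = distr (density lborel (\<lambda>u. ennreal (mix_weight x t u))) borel (mix_atom x t)"

lemma mix_weight_measurable [measurable]: "mix_weight x t \<in> borel_measurable borel"
  unfolding mix_weight_def fv_q2_def q1_eq decay_def by measurable

lemma mix_atom_measurable [measurable]: "mix_atom x t \<in> borel_measurable borel"
  unfolding mix_atom_def p11_eq p21_eq q1_eq decay_def by measurable

lemma mix_weight_nonneg: "t \<ge> 0 \<Longrightarrow> x \<in> {0..1} \<Longrightarrow> mix_weight x t u \<ge> 0"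
  unfolding mix_weight_def using q1_in_unit[of "t - u" x] q2_in_unit[of "t + u" x] by auto

lemma mix_atom_in_unit: "t \<ge> 0 \<Longrightarrow> x \<in> {0..1} \<Longrightarrow> mix_atom x t u \<in> {0..1}"
  unfolding mix_atom_def using p11_in_unit[of u] p21_in_unit[of "- u"] q1_in_unit[of t x] by auto

lemma sets_mix_law [simp]: "sets (mix_law x t) = sets borel"
  unfolding mix_law_def by simp

lemma space_mix_law [simp]: "space (mix_law x t) = UNIV"
  unfolding mix_law_def by simp

lemma integral_mix_law:
  assumes t: "t \<ge> 0" and x: "x \<in> {0..1}" and f[measurable]: "f \<in> borel_measurable borel"
    and B: "\<And>v. v \<in> {0..1} \<Longrightarrow> \<bar>f v\<bar> \<le> B"
  shows "integral\<^sup>L (mix_law x t) f = exp (- t) * f (q1 t x)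
     + (LBINT \<tau>:{0<..<t}. exp (- \<tau>) * (q1 (t - \<tau>) x * f (p11 \<tau>) + q2 (t - \<tau>) x * f (p21 \<tau>)))"
proof -
  define G1 where "G1 u = exp (- u) * (q1 (t - u) x * f (p11 u))" for u
  define G2 where "G2 u = exp (- u) * (q2 (t - u) x * f (p21 u))" for u
  define c where "c = exp (- t) * f (q1 t x)"
  have [measurable]: "G1 \<in> borel_measurable borel"
    unfolding G1_def q1_eq p11_eq decay_def by measurable
  have [measurable]: "G2 \<in> borel_measurable borel"
    unfolding G2_def fv_q2_def q1_eq p21_eq decay_def by measurable
  have G1_bound: "\<bar>G1 u\<bar> \<le> B" and G2_bound: "\<bar>G2 u\<bar> \<le> B" if "u \<in> {0<..<t}" for u
    unfolding G1_def G2_def using that x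
    by (auto intro!: abs_mult_unit_interval_le B q1_in_unit q2_in_unit p11_in_unit p21_in_unit)
  have c_bound: "\<bar>c\<bar> \<le> B"
    using abs_mult_unit_interval_le[of "exp (- t)" 1 "f (q1 t x)" B] t B[OF q1_in_unit[OF t x]]
    by (simp add: c_def)
  have int1: "integrable lborel (\<lambda>u. indicator {0<..<t} u * G1 u)"
    and int2: "integrable lborel (\<lambda>u. indicator {0<..<t} u * G2 u)"
    and int2': "integrable lborel (\<lambda>u. indicator {-t<..<0} u * G2 (- u))"
    and int3: "integrable lborel (\<lambda>u. indicator {t..t+1} u * c)"
    by (rule integrable_indicator_times_bounded[where B=B], use t G1_bound G2_bound c_bound in auto)+
  have "integral\<^sup>L (mix_law x t) f = (\<integral>u. mix_weight x t u * f (mix_atom x t u) \<partial>lborel)"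
    unfolding mix_law_def using mix_weight_nonneg[OF t x]
    by (subst integral_distr) (auto simp: integral_density)
  also have "\<dots> = (\<integral>u. indicator {0<..<t} u * G1 u + indicator {-t<..<0} u * G2 (- u)
       + indicator {t..t+1} u * c \<partial>lborel)"
    by (rule Bochner_Integration.integral_cong)
       (auto simp: mix_weight_def mix_atom_def G1_def G2_def c_def indicator_def)
  also have "\<dots> = (\<integral>u. indicator {0<..<t} u * G1 u \<partial>lborel)
       + (\<integral>u. indicator {-t<..<0} u * G2 (- u) \<partial>lborel) + c"
    using int1 int2' int3 t by simp
  also have "(\<integral>u. indicator {-t<..<0} u * G2 (- u) \<partial>lborel)
      = (\<integral>u. indicator {0<..<t} u * G2 u \<partial>lborel)"
    by (subst lborel_integral_real_affine[where c="-1" and t=0])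
       (auto intro!: Bochner_Integration.integral_cong simp: indicator_def)
  also have "(\<integral>u. indicator {0<..<t} u * G1 u \<partial>lborel) + (\<integral>u. indicator {0<..<t} u * G2 u \<partial>lborel)
     = (LBINT \<tau>:{0<..<t}. exp (- \<tau>) * (q1 (t - \<tau>) x * f (p11 \<tau>) + q2 (t - \<tau>) x * f (p21 \<tau>)))"
    unfolding set_lebesgue_integral_def using int1 int2
    by (subst Bochner_Integration.integral_add[symmetric])
       (auto intro!: Bochner_Integration.integral_cong simp: G1_def G2_def algebra_simps)
  finally show ?thesis unfolding c_def by simp
qed

lemma integral_mix_weight:
  assumes t: "t \<ge> 0" and x: "x \<in> {0..1}"
  shows "(\<integral>u. mix_weight x t u \<partial>lborel) = 1"
proof -
  have "(\<integral>u. mix_weight x t u \<partial>lborel)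
      = integral\<^sup>L (density lborel (\<lambda>u. ennreal (mix_weight x t u))) (\<lambda>_. 1)"
    using mix_weight_nonneg[OF t x] by (subst integral_density) auto
  also have "\<dots> = integral\<^sup>L (mix_law x t) (\<lambda>_. 1)"
    unfolding mix_law_def by (rule integral_distr[symmetric]) auto
  also have "\<dots> = 1"
    using integral_mix_law[OF t x, of "\<lambda>_. 1" 1] set_integral_exp_neg[OF t] by (simp add: fv_q2_def)
  finally show ?thesis .
qed

lemma prob_space_mix_law:
  assumes t: "t \<ge> 0" and x: "x \<in> {0..1}"
  shows "prob_space (mix_law x t)"
proof (rule prob_spaceI)
  have "integrable lborel (mix_weight x t)"
    using integral_mix_weight[OF t x] by (metis not_integrable_integral_eq zero_neq_one)
  then have "(\<integral>\<^sup>+u. ennreal (mix_weight x t u) \<partial>lborel) = 1"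
    using mix_weight_nonneg[OF t x] integral_mix_weight[OF t x]
    by (subst nn_integral_eq_integral) auto
  then show "emeasure (mix_law x t) (space (mix_law x t)) = 1"
    unfolding mix_law_def by (subst emeasure_distr) (auto simp: emeasure_density)
qed

lemma emeasure_mix_law_unit:
  assumes t: "t \<ge> 0" and x: "x \<in> {0..1}"
  shows "emeasure (mix_law x t) {0..1} = 1"
proof -
  interpret prob_space "mix_law x t" using prob_space_mix_law[OF t x] .
  have "mix_atom x t -` {0..1} = UNIV" using mix_atom_in_unit[OF t x] by auto
  then have "emeasure (mix_law x t) {0..1} = emeasure (mix_law x t) UNIV"
    unfolding mix_law_def by (simp add: emeasure_distr)
  then show ?thesis using emeasure_space_1 by simp
qed

lemma emeasure_mix_law:
  assumes t: "t \<ge> 0" and x: "x \<in> {0..1}" and A: "A \<in> sets borel"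
  shows "emeasure (mix_law x t) A = ennreal (fv_mix \<theta>1 \<theta>2 x t A)"
proof -
  interpret prob_space "mix_law x t" using prob_space_mix_law[OF t x] .
  have "emeasure (mix_law x t) A = ennreal (measure (mix_law x t) A)"
    by (simp add: emeasure_eq_measure)
  also have "measure (mix_law x t) A = integral\<^sup>L (mix_law x t) (indicator A)"
    using A by simp
  also have "\<dots> = fv_mix \<theta>1 \<theta>2 x t A"
    unfolding fv_mix_def using A by (subst integral_mix_law[OF t x, where B=1]) auto
  finally show ?thesis .
qed

lemma mix_law_0:
  assumes x: "x \<in> {0..1}"
  shows "mix_law x 0 = return borel x"
proof (rule measure_eqI)
  fix A assume "A \<in> sets (mix_law x 0)"
  then show "emeasure (mix_law x 0) A = emeasure (return borel x) A"
    by (simp add: emeasure_mix_law[OF order.refl x] fv_mix_def q1_eq set_lebesgue_integral_def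
        split: split_indicator)
qed simp

section \<open>The forward equation\<close>

lemma continuous_on_gen:
  assumes "continuous_on UNIV g" "continuous_on UNIV dg"
  shows "continuous_on UNIV (L g dg)"
  unfolding fv_gen_def
  by (intro continuous_intros continuous_on_compose2[OF assms(1)] continuous_on_compose2[OF assms(2)]) auto

text \<open>The mean of the mixture follows the mutation flow.\<close>

lemma mix_mean_eq: "q1 (t - \<tau>) x * p11 \<tau> + q2 (t - \<tau>) x * p21 \<tau> = q1 t x"
  unfolding fv_q2_def q1_eq p11_eq p21_eq decay_diff
  using decay_pos[of \<tau>] by (simp add: field_simps)

lemma integral_mix_law_chord:
  assumes t: "t \<ge> 0" and x: "x \<in> {0..1}"
  shows "integral\<^sup>L (mix_law x t) (chord g) = chord g (q1 t x)"
proof -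
  have bound: "\<bar>chord g v\<bar> \<le> \<bar>g 1\<bar> + \<bar>g 0\<bar>" if "v \<in> {0..1}" for v
  proof -
    have "\<bar>chord g v\<bar> \<le> v * \<bar>g 1\<bar> + (1 - v) * \<bar>g 0\<bar>"
      unfolding chord_def using that
      by (intro order.trans[OF abs_triangle_ineq add_mono]) (auto simp: abs_mult)
    also have "\<dots> \<le> \<bar>g 1\<bar> + \<bar>g 0\<bar>"
      using that by (intro add_mono mult_left_le_one_le) auto
    finally show ?thesis .
  qed
  have mix: "q1 (t - \<tau>) x * chord g (p11 \<tau>) + q2 (t - \<tau>) x * chord g (p21 \<tau>) = chord g (q1 t x)" for \<tau>
    using chord_affine[of "q1 (t - \<tau>) x" g "p11 \<tau>" "p21 \<tau>"] mix_mean_eq[of t \<tau> x]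
    by (simp add: fv_q2_def)
  have "integral\<^sup>L (mix_law x t) (chord g)
      = exp (- t) * chord g (q1 t x) + (LBINT \<tau>:{0<..<t}. exp (- \<tau>) * chord g (q1 t x))"
    by (subst integral_mix_law[OF t x _ bound]) (simp_all add: mix)
  also have "\<dots> = (exp (- t) + (LBINT \<tau>:{0<..<t}. exp (- \<tau>))) * chord g (q1 t x)"
    by (simp add: algebra_simps)
  also have "\<dots> = chord g (q1 t x)"
    using set_integral_exp_neg[OF t] by simp
  finally show ?thesis .
qed

text \<open>The part of the mixture integral that does not depend on the initial value, and the
  coefficient of its dependence on x.\<close>

definition mix_base :: "(real \<Rightarrow> real) \<Rightarrow> real \<Rightarrow> real" where
  "mix_base h t = (LBINT \<tau>=ereal 0..ereal t. exp (- \<tau>) * (p * h (p11 \<tau>) + (1 - p) * h (p21 \<tau>)))"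

definition mix_slope :: "(real \<Rightarrow> real) \<Rightarrow> real \<Rightarrow> real" where
  "mix_slope h t = (LBINT \<tau>=ereal 0..ereal t. exp (- \<tau>) / decay \<tau> * (h (p11 \<tau>) - h (p21 \<tau>)))"

lemma continuous_on_mix_base_integrand:
  "continuous_on UNIV h \<Longrightarrow>
     continuous_on S (\<lambda>\<tau>. exp (- \<tau>) * (p * h (p11 \<tau>) + (1 - p) * h (p21 \<tau>)))"
  unfolding p11_eq_q1 p21_eq_q1 by (intro continuous_intros continuous_on_flow)

lemma continuous_on_mix_slope_integrand:
  "continuous_on UNIV h \<Longrightarrow>
     continuous_on S (\<lambda>\<tau>. exp (- \<tau>) / decay \<tau> * (h (p11 \<tau>) - h (p21 \<tau>)))"
  unfolding p11_eq_q1 p21_eq_q1 by (intro continuous_intros continuous_on_flow continuous_on_decay) auto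

lemma integral_mix_law_continuous:
  assumes t: "t \<ge> 0" and x: "x \<in> {0..1}" and h: "continuous_on UNIV h"
  shows "integral\<^sup>L (mix_law x t) h
       = exp (- t) * h (q1 t x) + mix_base h t + (x - p) * decay t * mix_slope h t"
proof -
  obtain B where B: "\<And>v. v \<in> {0..1} \<Longrightarrow> \<bar>h v\<bar> \<le> B"
    using continuous_bounded_on_unit_interval[OF h] by blast
  have [measurable]: "h \<in> borel_measurable borel" using h by (simp add: borel_measurable_continuous_onI)
  have "(LBINT \<tau>:{0<..<t}. exp (- \<tau>) * (q1 (t - \<tau>) x * h (p11 \<tau>) + q2 (t - \<tau>) x * h (p21 \<tau>)))
      = (LBINT \<tau>=ereal 0..ereal t. exp (- \<tau>) * (q1 (t - \<tau>) x * h (p11 \<tau>) + q2 (t - \<tau>) x * h (p21 \<tau>)))"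
    using t by (simp add: interval_integral_Ioo)
  also have "\<dots> = (LBINT \<tau>=ereal 0..ereal t. exp (- \<tau>) * (p * h (p11 \<tau>) + (1 - p) * h (p21 \<tau>))
       + (x - p) * decay t * (exp (- \<tau>) / decay \<tau> * (h (p11 \<tau>) - h (p21 \<tau>))))"
    by (intro interval_integral_cong) (auto simp: fv_q2_def q1_eq decay_diff field_simps)
  also have "\<dots> = mix_base h t + (x - p) * decay t * mix_slope h t"
    unfolding mix_base_def mix_slope_def
    by (simp only: interval_integral_add_continuous[OF t] continuous_on_mix_base_integrand
        continuous_on_mix_slope_integrand continuous_on_mult_left h interval_lebesgue_integral_mult_right)
  finally show ?thesis
    using integral_mix_law[OF t x _ B] by simp
qed

lemma mix_base_gen:
  assumes t: "t \<ge> 0" and g: "\<And>y. (g has_real_derivative dg y) (at y)"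
    and cdg: "continuous_on UNIV dg"
  shows "mix_base (L g dg) t = mix_base (chord g) t
           + exp (- t) * (p * g (p11 t) + (1 - p) * g (p21 t)) - (p * g 1 + (1 - p) * g 0)"
proof -
  have cg: "continuous_on UNIV g"
    by (rule DERIV_continuous_on, rule g)
  define D where "D y \<tau> = exp (- \<tau>) * (L g dg (q1 \<tau> y) - chord g (q1 \<tau> y))" for y \<tau>
  define F where "F \<tau> = p * (exp (- \<tau>) * g (q1 \<tau> 1)) + (1 - p) * (exp (- \<tau>) * g (q1 \<tau> 0))" for \<tau>
  have cont_D: "continuous_on {0..t} (D y)" for y
    unfolding D_def by (intro continuous_intros continuous_on_flow continuous_on_gen cg cdg continuous_on_chord)
  have "mix_base (L g dg) t = (LBINT \<tau>=ereal 0..ereal t.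
      exp (- \<tau>) * (p * chord g (p11 \<tau>) + (1 - p) * chord g (p21 \<tau>)) + (p * D 1 \<tau> + (1 - p) * D 0 \<tau>))"
    unfolding mix_base_def D_def p11_eq_q1 p21_eq_q1 by (simp add: algebra_simps)
  also have "\<dots> = mix_base (chord g) t + (LBINT \<tau>=ereal 0..ereal t. p * D 1 \<tau> + (1 - p) * D 0 \<tau>)"
    unfolding mix_base_def
    by (rule interval_integral_add_continuous[OF t])
       (auto intro!: continuous_on_mix_base_integrand continuous_on_chord continuous_intros cont_D)
  also have "(LBINT \<tau>=ereal 0..ereal t. p * D 1 \<tau> + (1 - p) * D 0 \<tau>) = F t - F 0"
  proof (rule interval_integral_FTC_real[OF t])
    show "continuous_on {0..t} (\<lambda>\<tau>. p * D 1 \<tau> + (1 - p) * D 0 \<tau>)"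
      by (intro continuous_intros cont_D)
    show "(F has_real_derivative p * D 1 \<tau> + (1 - p) * D 0 \<tau>) (at \<tau> within {0..t})" for \<tau>
      unfolding F_def D_def by (intro DERIV_add DERIV_cmult flow_has_derivative[OF g])
  qed
  finally show ?thesis
    unfolding F_def p11_eq_q1 p21_eq_q1 by (simp add: algebra_simps)
qed

lemma mix_slope_gen:
  assumes t: "t \<ge> 0" and g: "\<And>y. (g has_real_derivative dg y) (at y)"
    and cdg: "continuous_on UNIV dg"
  shows "mix_slope (L g dg) t = mix_slope (chord g) t
           + (exp (- t) * g (p11 t) - exp (- t) * g (p21 t)) / decay t - (g 1 - g 0)
           - \<theta> / 2 * mix_slope g t"
proof -
  have cg: "continuous_on UNIV g"
    by (rule DERIV_continuous_on, rule g)
  define D where "D y \<tau> = exp (- \<tau>) * (L g dg (q1 \<tau> y) - chord g (q1 \<tau> y))" for y \<tau>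
  define K where "K \<tau> = (exp (- \<tau>) * g (q1 \<tau> 1) - exp (- \<tau>) * g (q1 \<tau> 0)) / decay \<tau>" for \<tau>
  define dK where "dK \<tau> = (D 1 \<tau> - D 0 \<tau>) / decay \<tau>
      + \<theta> / 2 * (exp (- \<tau>) / decay \<tau> * (g (p11 \<tau>) - g (p21 \<tau>)))" for \<tau>
  have cont_D: "continuous_on {0..t} (D y)" for y
    unfolding D_def by (intro continuous_intros continuous_on_flow continuous_on_gen cg cdg continuous_on_chord)
  have cont_dK: "continuous_on {0..t} dK"
    unfolding dK_def
    by (intro continuous_intros cont_D continuous_on_decay continuous_on_mix_slope_integrand cg) auto
  have "mix_slope (L g dg) t = (LBINT \<tau>=ereal 0..ereal t.
      exp (- \<tau>) / decay \<tau> * (chord g (p11 \<tau>) - chord g (p21 \<tau>)) + (dK \<tau> + (- \<theta> / 2) *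
      (exp (- \<tau>) / decay \<tau> * (g (p11 \<tau>) - g (p21 \<tau>)))))"
    unfolding mix_slope_def
    by (rule interval_integral_cong) (simp add: dK_def D_def p11_eq_q1 p21_eq_q1 field_simps)
  also have "\<dots> = mix_slope (chord g) t + (LBINT \<tau>=ereal 0..ereal t. dK \<tau>) - \<theta> / 2 * mix_slope g t"
    unfolding mix_slope_def
    by (simp only: interval_integral_add_continuous[OF t] continuous_on_mix_slope_integrand
        continuous_on_chord cont_dK cg continuous_on_add continuous_on_mult_left
        interval_lebesgue_integral_mult_right)
  also have "(LBINT \<tau>=ereal 0..ereal t. dK \<tau>) = K t - K 0"
  proof (rule interval_integral_FTC_real[OF t cont_dK])
    fix \<tau>
    have "((\<lambda>\<tau>. exp (- \<tau>) * g (q1 \<tau> 1) - exp (- \<tau>) * g (q1 \<tau> 0)) has_real_derivative D 1 \<tau> - D 0 \<tau>)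
        (at \<tau> within {0..t})"
      unfolding D_def by (intro DERIV_diff flow_has_derivative[OF g])
    then show "(K has_real_derivative dK \<tau>) (at \<tau> within {0..t})"
      unfolding K_def
      by (rule DERIV_divide[OF _ decay_has_derivative, THEN DERIV_cong])
         (simp_all add: dK_def p11_eq_q1 p21_eq_q1 field_simps power2_eq_square)
  qed
  finally show ?thesis
    unfolding K_def p11_eq_q1 p21_eq_q1 by simp
qed

lemma integral_mix_law_gen:
  assumes t: "t \<ge> 0" and x: "x \<in> {0..1}" and g: "\<And>y. (g has_real_derivative dg y) (at y)"
    and cdg: "continuous_on UNIV dg"
  shows "integral\<^sup>L (mix_law x t) (L g dg)
       = exp (- t) * (L g dg (q1 t x) - chord g (q1 t x))
         + exp (- t) * (p * g (p11 t) + (1 - p) * g (p21 t))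
         + (x - p) * (exp (- t) * (g (p11 t) - g (p21 t)) - \<theta> / 2 * decay t * mix_slope g t)"
proof -
  have cg: "continuous_on UNIV g"
    by (rule DERIV_continuous_on, rule g)
  have gen: "integral\<^sup>L (mix_law x t) (L g dg)
      = exp (- t) * L g dg (q1 t x) + mix_base (L g dg) t + (x - p) * decay t * mix_slope (L g dg) t"
    by (rule integral_mix_law_continuous[OF t x continuous_on_gen[OF cg cdg]])
  have chord: "chord g (q1 t x)
      = exp (- t) * chord g (q1 t x) + mix_base (chord g) t + (x - p) * decay t * mix_slope (chord g) t"
    using integral_mix_law_continuous[OF t x continuous_on_chord] integral_mix_law_chord[OF t x] by simp
  have chord_flow: "chord g (q1 t x) = p * g 1 + (1 - p) * g 0 + (x - p) * decay t * (g 1 - g 0)"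
    unfolding chord_def q1_eq by (simp add: algebra_simps)
  have slope: "(x - p) * decay t * mix_slope (L g dg) t
      = (x - p) * decay t * mix_slope (chord g) t + (x - p) * (exp (- t) * (g (p11 t) - g (p21 t)))
        - (x - p) * decay t * (g 1 - g 0) - (x - p) * (\<theta> / 2 * decay t * mix_slope g t)"
    unfolding mix_slope_gen[OF t g cdg] by (simp add: field_simps)
  have "integral\<^sup>L (mix_law x t) (L g dg)
      = exp (- t) * L g dg (q1 t x)
        + (mix_base (chord g) t + (x - p) * decay t * mix_slope (chord g) t)
        - (p * g 1 + (1 - p) * g 0 + (x - p) * decay t * (g 1 - g 0))
        + exp (- t) * (p * g (p11 t) + (1 - p) * g (p21 t))
        + (x - p) * (exp (- t) * (g (p11 t) - g (p21 t)) - \<theta> / 2 * decay t * mix_slope g t)"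
    unfolding gen mix_base_gen[OF t g cdg] slope by (simp add: algebra_simps)
  also have "\<dots> = exp (- t) * L g dg (q1 t x) + (chord g (q1 t x) - exp (- t) * chord g (q1 t x))
        - chord g (q1 t x) + exp (- t) * (p * g (p11 t) + (1 - p) * g (p21 t))
        + (x - p) * (exp (- t) * (g (p11 t) - g (p21 t)) - \<theta> / 2 * decay t * mix_slope g t)"
    using chord chord_flow by simp
  finally show ?thesis by (simp add: algebra_simps)
qed

theorem mix_law_forward_equation:
  assumes x: "x \<in> {0..1}" and t: "t \<ge> 0" and g: "\<And>y. (g has_real_derivative dg y) (at y)"
    and dg: "\<And>y. (dg has_real_derivative d2g y) (at y)"
  shows "((\<lambda>s. integral\<^sup>L (mix_law x s) g) has_real_derivative integral\<^sup>L (mix_law x t) (L g dg))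
           (at t within {0..})"
proof -
  have cg: "continuous_on UNIV g"
    by (rule DERIV_continuous_on, rule g)
  have cdg: "continuous_on UNIV dg"
    by (rule DERIV_continuous_on, rule dg)
  let ?I = "{0..t + 1}"
  have d_base: "(mix_base g has_real_derivative exp (- t) * (p * g (p11 t) + (1 - p) * g (p21 t)))
      (at t within ?I)"
    unfolding mix_base_def has_real_derivative_iff_has_vector_derivative
    by (rule interval_integral_FTC2[OF _ _ continuous_on_mix_base_integrand[OF cg]]) (use t in auto)
  have d_slope: "(mix_slope g has_real_derivative exp (- t) / decay t * (g (p11 t) - g (p21 t)))
      (at t within ?I)"
    unfolding mix_slope_def has_real_derivative_iff_has_vector_derivative
    by (rule interval_integral_FTC2[OF _ _ continuous_on_mix_slope_integrand[OF cg]]) (use t in auto)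
  have "((\<lambda>s. exp (- s) * g (q1 s x) + mix_base g s + (x - p) * (decay s * mix_slope g s))
      has_real_derivative exp (- t) * (L g dg (q1 t x) - chord g (q1 t x))
        + exp (- t) * (p * g (p11 t) + (1 - p) * g (p21 t))
        + (x - p) * (- \<theta> / 2 * decay t * mix_slope g t
                     + exp (- t) / decay t * (g (p11 t) - g (p21 t)) * decay t)) (at t within ?I)"
    by (intro DERIV_add DERIV_cmult DERIV_mult flow_has_derivative[OF g] d_base d_slope
        decay_has_derivative)
  moreover have "exp (- t) / decay t * (g (p11 t) - g (p21 t)) * decay t
      = exp (- t) * (g (p11 t) - g (p21 t))"
    by simp
  ultimately have "((\<lambda>s. exp (- s) * g (q1 s x) + mix_base g s + (x - p) * (decay s * mix_slope g s))
      has_real_derivative integral\<^sup>L (mix_law x t) (L g dg)) (at t within ?I)"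
    unfolding integral_mix_law_gen[OF t x g cdg] by (simp add: algebra_simps)
  then have "((\<lambda>s. exp (- s) * g (q1 s x) + mix_base g s + (x - p) * (decay s * mix_slope g s))
      has_real_derivative integral\<^sup>L (mix_law x t) (L g dg)) (at t within {0..})"
    by (rule has_real_derivative_within_Ici) (use t in auto)
  then show ?thesis
    by (rule has_field_derivative_transform_within[OF _ zero_less_one])
       (use t in \<open>auto simp: integral_mix_law_continuous[OF _ x cg] mult.assoc\<close>)
qed

section \<open>Uniqueness\<close>

lemma unit_interval_law_evolution:
  "fv_evolution \<theta>1 \<theta>2 P \<Longrightarrow> t \<ge> 0 \<Longrightarrow> unit_interval_law (P t)"
  by (simp add: fv_evolution_def unit_interval_law_def)

lemma mix_law_evolution: "x \<in> {0..1} \<Longrightarrow> fv_evolution \<theta>1 \<theta>2 (mix_law x)"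
  unfolding fv_evolution_def
  by (auto intro!: mix_law_forward_equation prob_space_mix_law emeasure_mix_law_unit)

lemma gen_power_eq:
  assumes "k \<ge> 1"
  shows "L (\<lambda>y. y ^ k) (\<lambda>y. real k * y ^ (k - 1))
       = (\<lambda>y. y - (1 + \<theta> * real k / 2) * y ^ k + \<theta>1 * real k / 2 * y ^ (k - 1))"
proof -
  obtain m where "k = Suc m" using assms by (cases k) auto
  then show ?thesis by (intro ext) (simp add: fv_gen_def field_simps)
qed

lemma moment_has_derivative:
  assumes P: "fv_evolution \<theta>1 \<theta>2 P" and k: "k \<ge> 1" and t: "t \<ge> 0"
  shows "((\<lambda>s. \<integral>y. y ^ k \<partial>P s) has_real_derivative
     (\<integral>y. y \<partial>P t) - (1 + \<theta> * real k / 2) * (\<integral>y. y ^ k \<partial>P t)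
       + \<theta>1 * real k / 2 * (\<integral>y. y ^ (k - 1) \<partial>P t)) (at t within {0..})"
proof -
  define dg where "dg y = real k * y ^ (k - 1)" for y :: real
  define d2g where "d2g y = real k * (real (k - 1) * y ^ (k - 1 - 1))" for y :: real
  have "((\<lambda>y. y ^ k) has_real_derivative dg y) (at y)" for y
    unfolding dg_def using DERIV_pow[of k y] by simp
  moreover have "(dg has_real_derivative d2g y) (at y)" for y
    unfolding dg_def d2g_def by (auto intro!: derivative_eq_intros)
  moreover have "continuous_on UNIV d2g"
    unfolding d2g_def by (intro continuous_intros)
  ultimately have "((\<lambda>s. \<integral>y. y ^ k \<partial>P s) has_real_derivative (\<integral>y. L (\<lambda>y. y ^ k) dg y \<partial>P t))
      (at t within {0..})"
    using P t unfolding fv_evolution_def by blast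
  moreover have int: "integrable (P t) (\<lambda>y. y ^ n)" for n
    by (intro unit_interval_law_integrable[OF unit_interval_law_evolution[OF P t]] continuous_intros)
  ultimately show ?thesis
    using int[of 1] unfolding dg_def gen_power_eq[OF k] by simp
qed

text \<open>The moments of a solution of the forward equation solve a triangular system of linear ODEs,
  so they are determined by the initial law.\<close>

theorem evolution_unique:
  assumes P: "fv_evolution \<theta>1 \<theta>2 P" and Q: "fv_evolution \<theta>1 \<theta>2 Q"
    and P0: "P 0 = Q 0" and t: "t \<ge> 0"
  shows "P t = Q t"
proof -
  define d where "d k s = (\<integral>y. y ^ k \<partial>P s) - (\<integral>y. y ^ k \<partial>Q s)" for k s
  have "\<forall>s\<ge>0. d k s = 0" for k
  proof (induction k rule: less_induct)
    case (less k)
    show ?case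
    proof (cases "k = 0")
      case True
      then show ?thesis
        using unit_interval_law_evolution[OF P] unit_interval_law_evolution[OF Q]
        by (auto simp: d_def unit_interval_law_def prob_space.prob_space)
    next
      case False
      define l where "l = (if k = 1 then 1 else 0) - (1 + \<theta> * real k / 2)"
      have "(d k has_real_derivative l * d k s) (at s within {0..})" if s: "s \<ge> 0" for s
      proof -
        have "(d k has_real_derivative d 1 s - (1 + \<theta> * real k / 2) * d k s
            + \<theta>1 * real k / 2 * d (k - 1) s) (at s within {0..})"
          unfolding d_def[abs_def]
          using DERIV_diff[OF moment_has_derivative[OF P _ s] moment_has_derivative[OF Q _ s]] False
          by (simp add: algebra_simps)
        moreover have "d (k - 1) s = 0" "k \<noteq> 1 \<Longrightarrow> d 1 s = 0"
          using less.IH[of "k - 1"] less.IH[of 1] False s by auto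
        ultimately show ?thesis by (cases "k = 1") (simp_all add: l_def algebra_simps)
      qed
      moreover have "d k 0 = 0" unfolding d_def using P0 by simp
      ultimately show ?thesis using deriv_linear_imp_zero by blast
    qed
  qed
  then show ?thesis
    using t unit_interval_law_eqI_moments[OF unit_interval_law_evolution[OF P t]
        unit_interval_law_evolution[OF Q t]] by (simp add: d_def)
qed

lemma fv_evolution_cong:
  assumes Q: "fv_evolution \<theta>1 \<theta>2 Q" and eq: "\<And>t. t \<ge> 0 \<Longrightarrow> P t = Q t"
  shows "fv_evolution \<theta>1 \<theta>2 P"
  unfolding fv_evolution_def
proof (intro conjI allI impI)
  fix t :: real assume "t \<ge> 0"
  then show "sets (P t) = sets borel" "prob_space (P t)" "emeasure (P t) {0..1} = 1"
    using Q eq by (simp_all add: fv_evolution_def)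
next
  fix g dg d2g :: "real \<Rightarrow> real" and t :: real
  assume smooth: "(\<forall>y. (g has_real_derivative dg y) (at y)) \<and> (\<forall>y. (dg has_real_derivative d2g y) (at y))
      \<and> continuous_on UNIV d2g"
    and t: "t \<ge> 0"
  have "((\<lambda>s. \<integral>y. g y \<partial>Q s) has_real_derivative (\<integral>y. L g dg y \<partial>Q t)) (at t within {0..})"
    using Q smooth t unfolding fv_evolution_def by blast
  then show "((\<lambda>s. \<integral>y. g y \<partial>P s) has_real_derivative (\<integral>y. L g dg y \<partial>P t)) (at t within {0..})"
    unfolding eq[OF t]
    by (rule has_field_derivative_transform_within[OF _ zero_less_one]) (use t eq in auto)
qed

lemma fv_law_iff_mix:
  assumes x: "x \<in> {0..1}" and sets_P: "\<forall>t\<ge>0. sets (P t) = sets borel"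
  shows "fv_law \<theta>1 \<theta>2 x P \<longleftrightarrow>
           (\<forall>t\<ge>0. \<forall>A\<in>sets borel. emeasure (P t) A = ennreal (fv_mix \<theta>1 \<theta>2 x t A))"
    (is "_ \<longleftrightarrow> ?mix")
proof -
  have "?mix \<longleftrightarrow> (\<forall>t\<ge>0. P t = mix_law x t)"
    using sets_P by (auto simp: emeasure_mix_law[OF _ x] intro!: measure_eqI)
  moreover have "fv_law \<theta>1 \<theta>2 x P \<longleftrightarrow> (\<forall>t\<ge>0. P t = mix_law x t)"
  proof
    assume "fv_law \<theta>1 \<theta>2 x P"
    then show "\<forall>t\<ge>0. P t = mix_law x t"
      by (auto intro: evolution_unique[OF _ mix_law_evolution[OF x]] simp: fv_law_def mix_law_0[OF x])
  next
    assume "\<forall>t\<ge>0. P t = mix_law x t"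
    then show "fv_law \<theta>1 \<theta>2 x P"
      using fv_evolution_cong[OF mix_law_evolution[OF x]] mix_law_0[OF x] by (simp add: fv_law_def)
  qed
  ultimately show ?thesis by blast
qed

section \<open>The density of the continuous part\<close>

lemma decay_powr: "decay \<tau> powr (2 / \<theta> - 1) = exp (- \<tau>) / decay \<tau>"
proof -
  have "decay \<tau> powr (2 / \<theta> - 1) = exp ((2 / \<theta> - 1) * (- \<theta> * \<tau> / 2))"
    unfolding decay_def powr_def by simp
  also have "(2 / \<theta> - 1) * (- \<theta> * \<tau> / 2) = - \<tau> - (- \<theta> * \<tau> / 2)"
    using theta_pos by (simp add: field_simps)
  also have "exp (- \<tau> - (- \<theta> * \<tau> / 2)) = exp (- \<tau>) / decay \<tau>"
    unfolding decay_def by (rule exp_diff)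
  finally show ?thesis .
qed

definition dens_upper :: "real \<Rightarrow> real \<Rightarrow> real \<Rightarrow> real" where
  "dens_upper x t \<xi> = (p + decay t * (x - p) * ((1 - p) / (\<xi> - p))) * (2 / \<theta>)
     * ((\<xi> - p) / (1 - p)) powr (2 / \<theta> - 1) * (1 / (1 - p))"

definition dens_lower :: "real \<Rightarrow> real \<Rightarrow> real \<Rightarrow> real" where
  "dens_lower x t \<xi> = (1 - p - decay t * (x - p) * inverse (1 - \<xi> / p)) * (2 / \<theta>)
     * (1 - \<xi> / p) powr (2 / \<theta> - 1) * (1 / p)"

lemma dens_upper_measurable [measurable]: "dens_upper x t \<in> borel_measurable borel"
  unfolding dens_upper_def by measurable

lemma dens_lower_measurable [measurable]: "dens_lower x t \<in> borel_measurable borel"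
  unfolding dens_lower_def by measurable

lemma fv_dens_eq:
  "fv_dens \<theta>1 \<theta>2 x t \<xi>
     = indicator {p11 t<..1} \<xi> * dens_upper x t \<xi> + indicator {0..<p21 t} \<xi> * dens_lower x t \<xi>"
proof -
  have decay: "exp (- \<theta> * t / 2) = decay t" unfolding decay_def ..
  have "p + (1 - p) * decay t > 0" using p_less_p11[of t] p_pos by (simp add: p11_eq)
  then show ?thesis
    using p_less_p11[of t] p21_less_p[of t] p_less_1
    unfolding fv_dens_def Let_def decay p11_eq p21_eq dens_upper_def[symmetric] dens_lower_def[symmetric]
    by (auto simp: indicator_def)
qed

lemma fv_dens_AE_eq:
  "AE \<xi> in lborel. fv_dens \<theta>1 \<theta>2 x t \<xi>
     = indicator {p11 t..1} \<xi> * dens_upper x t \<xi> + indicator {0..p21 t} \<xi> * dens_lower x t \<xi>"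
  using AE_lborel_singleton[of "p11 t"] AE_lborel_singleton[of "p21 t"]
  by eventually_elim (auto simp: fv_dens_eq indicator_def)

text \<open>The two branches of the density are pulled back by \<xi> = p11 \<tau> and \<xi> = p21 \<tau> to the
  weights of the mixture.\<close>

lemma dens_upper_p11:
  "dens_upper x t (p11 \<tau>) * ((1 - p) * (\<theta> / 2) * decay \<tau>) = exp (- \<tau>) * q1 (t - \<tau>) x"
proof -
  have p1: "1 - p \<noteq> 0" using p_less_1 by simp
  have "dens_upper x t (p11 \<tau>)
      = (p + decay t * (x - p) / decay \<tau>) * (2 / \<theta>) * (exp (- \<tau>) / decay \<tau>) * (1 / (1 - p))"
    unfolding dens_upper_def p11_eq using p1 by (simp add: decay_powr)
  then show ?thesis
    unfolding q1_eq decay_diff using p1 theta_pos by (simp add: field_simps)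
qed

lemma dens_lower_p21:
  "dens_lower x t (p21 \<tau>) * (p * (\<theta> / 2) * decay \<tau>) = exp (- \<tau>) * q2 (t - \<tau>) x"
proof -
  have e: "1 - p21 \<tau> / p = decay \<tau>" using p_pos by (simp add: p21_eq field_simps)
  show ?thesis
    unfolding dens_lower_def e decay_powr q2_eq decay_diff
    using p_pos theta_pos by (simp add: field_simps)
qed

lemma continuous_on_dens_upper: "continuous_on {p11 t..1} (dens_upper x t)"
proof -
  have nonzero: "\<forall>\<xi>\<in>{p11 t..1}. \<xi> - p \<noteq> 0" "\<forall>\<xi>\<in>{p11 t..1}. (\<xi> - p) / (1 - p) \<noteq> 0"
    using p_less_p11[of t] p_less_1 by auto
  have "continuous_on {p11 t..1} (\<lambda>\<xi>. (\<xi> - p) / (1 - p))"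
    using p_less_1 by (intro continuous_intros) auto
  then have "continuous_on {p11 t..1} (\<lambda>\<xi>. ((\<xi> - p) / (1 - p)) powr (2 / \<theta> - 1))"
    by (rule continuous_on_powr[OF _ continuous_on_const nonzero(2)])
  moreover have "continuous_on {p11 t..1} (\<lambda>\<xi>. (1 - p) / (\<xi> - p))"
    by (rule continuous_on_divide[OF continuous_on_const continuous_on_diff nonzero(1)])
       (intro continuous_intros)+
  ultimately show ?thesis
    unfolding dens_upper_def by (intro continuous_on_mult continuous_on_add continuous_on_const)
qed

lemma continuous_on_dens_lower: "continuous_on {0..p21 t} (dens_lower x t)"
proof -
  have nonzero: "\<forall>\<xi>\<in>{0..p21 t}. 1 - \<xi> / p \<noteq> 0"
    using p21_less_p[of t] p_pos by (auto simp: field_simps)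
  have cont: "continuous_on {0..p21 t} (\<lambda>\<xi>. 1 - \<xi> / p)"
    using p_pos by (intro continuous_intros) auto
  have "continuous_on {0..p21 t} (\<lambda>\<xi>. inverse (1 - \<xi> / p))"
    by (rule continuous_on_inverse[OF cont nonzero])
  moreover have "continuous_on {0..p21 t} (\<lambda>\<xi>. (1 - \<xi> / p) powr (2 / \<theta> - 1))"
    by (rule continuous_on_powr[OF cont continuous_on_const nonzero])
  ultimately show ?thesis
    unfolding dens_lower_def by (intro continuous_on_mult continuous_on_diff continuous_on_const)
qed

lemma integrable_dens_upper:
  assumes t: "t \<ge> 0" and F[measurable]: "F \<in> borel_measurable borel"
    and B: "\<And>v. v \<in> {0..1} \<Longrightarrow> \<bar>F v\<bar> \<le> B"
  shows "integrable lborel (\<lambda>\<xi>. indicator {p11 t..1} \<xi> * (F \<xi> * dens_upper x t \<xi>))"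
proof -
  obtain C where C: "\<And>v. v \<in> {p11 t..1} \<Longrightarrow> norm (dens_upper x t v) \<le> C"
    using continuous_on_compact_bound[OF compact_Icc continuous_on_dens_upper] by blast
  show ?thesis
  proof (rule integrable_indicator_times_bounded[where B="B * C"])
    fix u assume u: "u \<in> {p11 t..1}"
    then have "\<bar>F u\<bar> \<le> B" using B p11_in_unit[OF t] by auto
    then show "\<bar>F u * dens_upper x t u\<bar> \<le> B * C"
      using C[OF u] unfolding abs_mult real_norm_def by (intro mult_mono) auto
  qed (use p11_in_unit[OF t] in auto)
qed

lemma integrable_dens_lower:
  assumes t: "t \<ge> 0" and F[measurable]: "F \<in> borel_measurable borel"
    and B: "\<And>v. v \<in> {0..1} \<Longrightarrow> \<bar>F v\<bar> \<le> B"
  shows "integrable lborel (\<lambda>\<xi>. indicator {0..p21 t} \<xi> * (F \<xi> * dens_lower x t \<xi>))"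
proof -
  obtain C where C: "\<And>v. v \<in> {0..p21 t} \<Longrightarrow> norm (dens_lower x t v) \<le> C"
    using continuous_on_compact_bound[OF compact_Icc continuous_on_dens_lower] by blast
  show ?thesis
  proof (rule integrable_indicator_times_bounded[where B="B * C"])
    fix u assume u: "u \<in> {0..p21 t}"
    then have "\<bar>F u\<bar> \<le> B" using B p21_in_unit[OF t] by auto
    then show "\<bar>F u * dens_lower x t u\<bar> \<le> B * C"
      using C[OF u] unfolding abs_mult real_norm_def by (intro mult_mono) auto
  qed (use p21_in_unit[OF t] in auto)
qed

lemma integral_dens_upper:
  assumes t: "t \<ge> 0" and F[measurable]: "F \<in> borel_measurable borel"
    and B: "\<And>v. v \<in> {0..1} \<Longrightarrow> \<bar>F v\<bar> \<le> B"
  shows "(\<integral>\<xi>. F \<xi> * dens_upper x t \<xi> * indicator {p11 t..1} \<xi> \<partial>lborel)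
     = (\<integral>\<tau>. exp (- \<tau>) * q1 (t - \<tau>) x * F (p11 \<tau>) * indicator {0..t} \<tau> \<partial>lborel)"
proof -
  \<comment> \<open>p11 decreases, so the substitution runs along the increasing map s \<mapsto> p11 (- s)\<close>
  define g where "g s = p11 (- s)" for s
  have g_ends: "g 0 = 1" "g (- t) = p11 t" unfolding g_def by (simp_all add: p11_eq)
  have "(g has_real_derivative (1 - p) * (\<theta> / 2) * decay (- s)) (at s)" for s
    unfolding g_def[abs_def] p11_eq decay_def
    by (auto intro!: derivative_eq_intros simp: algebra_simps)
  then have "(LBINT \<xi>. (F \<xi> * dens_upper x t \<xi>) * indicator {g (- t)..g 0} \<xi>)
     = (LBINT s. (F (g s) * dens_upper x t (g s)) * ((1 - p) * (\<theta> / 2) * decay (- s))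
          * indicator {- t..0} s)"
    using t integrable_dens_upper[OF t F B, of x] p_less_1 theta_pos
    by (intro integral_substitution(2))
       (auto intro!: continuous_intros continuous_on_compose2[OF continuous_on_decay]
         simp: g_ends set_integrable_def less_imp_le[OF decay_pos] mult_ac)
  also have "\<dots> = (LBINT \<tau>. F (p11 \<tau>) * (dens_upper x t (p11 \<tau>) * ((1 - p) * (\<theta> / 2) * decay \<tau>))
          * indicator {0..t} \<tau>)"
    by (subst lborel_integral_real_affine[where c="-1" and t=0])
       (auto intro!: Bochner_Integration.integral_cong simp: g_def indicator_def)
  finally show ?thesis
    unfolding g_ends dens_upper_p11 by (simp add: mult_ac)
qed

lemma integral_dens_lower:
  assumes t: "t \<ge> 0" and F[measurable]: "F \<in> borel_measurable borel"
    and B: "\<And>v. v \<in> {0..1} \<Longrightarrow> \<bar>F v\<bar> \<le> B"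
  shows "(\<integral>\<xi>. F \<xi> * dens_lower x t \<xi> * indicator {0..p21 t} \<xi> \<partial>lborel)
     = (\<integral>\<tau>. exp (- \<tau>) * q2 (t - \<tau>) x * F (p21 \<tau>) * indicator {0..t} \<tau> \<partial>lborel)"
proof -
  have p21_0: "p21 0 = 0" by (simp add: p21_eq)
  have "(p21 has_real_derivative p * (\<theta> / 2) * decay \<tau>) (at \<tau>)" for \<tau>
    unfolding p21_eq[abs_def] by (auto intro!: derivative_eq_intros decay_has_derivative)
  then have "(LBINT \<xi>. (F \<xi> * dens_lower x t \<xi>) * indicator {p21 0..p21 t} \<xi>)
     = (LBINT \<tau>. (F (p21 \<tau>) * dens_lower x t (p21 \<tau>)) * (p * (\<theta> / 2) * decay \<tau>) * indicator {0..t} \<tau>)"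
    using t integrable_dens_lower[OF t F B, of x] p_pos theta_pos
    by (intro integral_substitution(2))
       (auto intro!: continuous_intros continuous_on_decay
         simp: p21_0 set_integrable_def less_imp_le[OF decay_pos] mult_ac)
  also have "\<dots> = (\<integral>\<tau>. exp (- \<tau>) * q2 (t - \<tau>) x * F (p21 \<tau>) * indicator {0..t} \<tau> \<partial>lborel)"
    using dens_lower_p21[of x t] by (intro Bochner_Integration.integral_cong) (simp_all add: algebra_simps)
  finally show ?thesis
    unfolding p21_0 .
qed

lemma integral_mix_integrand_Icc:
  assumes t: "t \<ge> 0" and x: "x \<in> {0..1}" and F[measurable]: "F \<in> borel_measurable borel"
    and B: "\<And>v. v \<in> {0..1} \<Longrightarrow> \<bar>F v\<bar> \<le> B"
  shows "(\<integral>\<tau>. exp (- \<tau>) * q1 (t - \<tau>) x * F (p11 \<tau>) * indicator {0..t} \<tau> \<partial>lborel)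
       + (\<integral>\<tau>. exp (- \<tau>) * q2 (t - \<tau>) x * F (p21 \<tau>) * indicator {0..t} \<tau> \<partial>lborel)
     = (LBINT \<tau>:{0<..<t}. exp (- \<tau>) * (q1 (t - \<tau>) x * F (p11 \<tau>) + q2 (t - \<tau>) x * F (p21 \<tau>)))"
proof -
  have bound1: "\<bar>exp (- \<tau>) * (q1 (t - \<tau>) x * F (p11 \<tau>))\<bar> \<le> B"
    and bound2: "\<bar>exp (- \<tau>) * (q2 (t - \<tau>) x * F (p21 \<tau>))\<bar> \<le> B" if "\<tau> \<in> {0..t}" for \<tau>
    using that x
    by (auto intro!: abs_mult_unit_interval_le B q1_in_unit q2_in_unit p11_in_unit p21_in_unit)
  have "integrable lborel (\<lambda>\<tau>. indicator {0..t} \<tau> * (exp (- \<tau>) * (q1 (t - \<tau>) x * F (p11 \<tau>))))"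
    by (rule integrable_indicator_times_bounded[where B=B])
       (use t bound1 in \<open>auto simp: q1_eq p11_eq decay_def\<close>)
  moreover have "integrable lborel (\<lambda>\<tau>. indicator {0..t} \<tau> * (exp (- \<tau>) * (q2 (t - \<tau>) x * F (p21 \<tau>))))"
    by (rule integrable_indicator_times_bounded[where B=B])
       (use t bound2 in \<open>auto simp: q2_eq p21_eq decay_def\<close>)
  ultimately have "(\<integral>\<tau>. exp (- \<tau>) * q1 (t - \<tau>) x * F (p11 \<tau>) * indicator {0..t} \<tau> \<partial>lborel)
       + (\<integral>\<tau>. exp (- \<tau>) * q2 (t - \<tau>) x * F (p21 \<tau>) * indicator {0..t} \<tau> \<partial>lborel)
     = (\<integral>\<tau>. indicator {0..t} \<tau> * (exp (- \<tau>) * (q1 (t - \<tau>) x * F (p11 \<tau>) + q2 (t - \<tau>) x * F (p21 \<tau>)))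
         \<partial>lborel)"
    by (simp add: algebra_simps)
  also have "\<dots> = (LBINT \<tau>:{0<..<t}. exp (- \<tau>) * (q1 (t - \<tau>) x * F (p11 \<tau>) + q2 (t - \<tau>) x * F (p21 \<tau>)))"
    unfolding set_lebesgue_integral_def
  proof (rule integral_cong_AE)
    show "AE \<tau> in lborel. indicator {0..t} \<tau> * (exp (- \<tau>) * (q1 (t - \<tau>) x * F (p11 \<tau>)
        + q2 (t - \<tau>) x * F (p21 \<tau>))) = indicator {0<..<t} \<tau> *\<^sub>R (exp (- \<tau>) * (q1 (t - \<tau>) x
        * F (p11 \<tau>) + q2 (t - \<tau>) x * F (p21 \<tau>)))"
      using AE_lborel_singleton[of 0] AE_lborel_singleton[of t]
      by eventually_elim (auto simp: indicator_def)
  qed (unfold q1_eq q2_eq p11_eq p21_eq decay_def, measurable)+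
  finally show ?thesis .
qed

lemma integral_mix_density:
  assumes t: "t \<ge> 0" and x: "x \<in> {0..1}" and F[measurable]: "F \<in> borel_measurable borel"
    and B: "\<And>v. v \<in> {0..1} \<Longrightarrow> \<bar>F v\<bar> \<le> B"
  shows "integrable lborel (\<lambda>\<xi>. F \<xi> * fv_dens \<theta>1 \<theta>2 x t \<xi>)"
    and "(LBINT \<tau>:{0<..<t}. exp (- \<tau>) * (q1 (t - \<tau>) x * F (p11 \<tau>) + q2 (t - \<tau>) x * F (p21 \<tau>)))
       = (\<integral>\<xi>. F \<xi> * fv_dens \<theta>1 \<theta>2 x t \<xi> \<partial>lborel)"
proof -
  let ?split = "\<lambda>\<xi>. indicator {p11 t..1} \<xi> * (F \<xi> * dens_upper x t \<xi>)
     + indicator {0..p21 t} \<xi> * (F \<xi> * dens_lower x t \<xi>)"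
  have int_upper: "integrable lborel (\<lambda>\<xi>. indicator {p11 t..1} \<xi> * (F \<xi> * dens_upper x t \<xi>))"
    and int_lower: "integrable lborel (\<lambda>\<xi>. indicator {0..p21 t} \<xi> * (F \<xi> * dens_lower x t \<xi>))"
    using integrable_dens_upper[OF t F B] integrable_dens_lower[OF t F B] by simp_all
  have [measurable]: "fv_dens \<theta>1 \<theta>2 x t \<in> borel_measurable borel"
    unfolding fv_dens_eq[abs_def] by measurable
  have AE_split: "AE \<xi> in lborel. ?split \<xi> = F \<xi> * fv_dens \<theta>1 \<theta>2 x t \<xi>"
    using fv_dens_AE_eq[of x t] by eventually_elim (simp add: algebra_simps)
  show "integrable lborel (\<lambda>\<xi>. F \<xi> * fv_dens \<theta>1 \<theta>2 x t \<xi>)"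
    using int_upper int_lower by (intro integrable_cong_AE_imp[OF _ _ AE_split]) auto
  have "(\<integral>\<xi>. F \<xi> * fv_dens \<theta>1 \<theta>2 x t \<xi> \<partial>lborel) = (\<integral>\<xi>. ?split \<xi> \<partial>lborel)"
    using AE_split by (intro integral_cong_AE[symmetric]) auto
  also have "\<dots> = (\<integral>\<xi>. F \<xi> * dens_upper x t \<xi> * indicator {p11 t..1} \<xi> \<partial>lborel)
      + (\<integral>\<xi>. F \<xi> * dens_lower x t \<xi> * indicator {0..p21 t} \<xi> \<partial>lborel)"
    using int_upper int_lower by (simp add: mult_ac)
  finally show "(LBINT \<tau>:{0<..<t}. exp (- \<tau>) * (q1 (t - \<tau>) x * F (p11 \<tau>) + q2 (t - \<tau>) x * F (p21 \<tau>)))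
       = (\<integral>\<xi>. F \<xi> * fv_dens \<theta>1 \<theta>2 x t \<xi> \<partial>lborel)"
    using integral_dens_upper[OF t F B] integral_dens_lower[OF t F B]
      integral_mix_integrand_Icc[OF t x F B] by simp
qed

lemma fv_mix_eq_density:
  assumes x: "x \<in> {0..1}" and t: "t > 0" and A: "A \<in> sets borel"
  shows "fv_mix \<theta>1 \<theta>2 x t A = exp (- t) * indicator A (q1 t x) + (LBINT \<xi>:A. fv_dens \<theta>1 \<theta>2 x t \<xi>)"
  using integral_mix_density(2)[of t x "indicator A" 1] t x A
  unfolding fv_mix_def set_lebesgue_integral_def by simp

section \<open>The stationary law\<close>

abbreviation "stat \<equiv> fv_stat \<theta>1 \<theta>2"

lemma stat_measurable [measurable]: "stat \<in> borel_measurable borel"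
  unfolding fv_stat_def Let_def by measurable

lemma stat_nonneg: "stat \<xi> \<ge> 0"
  unfolding fv_stat_def Let_def using p_pos p_less_1 theta_pos by auto

lemma stat_outside: "\<xi> \<notin> {0..1} \<Longrightarrow> stat \<xi> = 0"
  unfolding fv_stat_def Let_def by auto

lemma stat_p: "stat p = 0"
  unfolding fv_stat_def Let_def by simp

text \<open>Started at x = p the frequency stays at p until the first replacement, and the density of
  the law is the stationary density restricted to the complement of [p21 t, p11 t].\<close>

definition stat_support :: "real \<Rightarrow> real set" where
  "stat_support t = {\<xi>. p11 t < \<xi> \<or> \<xi> < p21 t}"

lemma stat_support_measurable [measurable]: "stat_support t \<in> sets borel"
  unfolding stat_support_def by measurable

lemma fv_dens_at_p: "fv_dens \<theta>1 \<theta>2 p t \<xi> = indicator (stat_support t) \<xi> * stat \<xi>"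
proof -
  have "exp (- \<theta> * t / 2) = decay t" unfolding decay_def ..
  then show ?thesis
    using p_less_p11[of t] p21_less_p[of t]
    unfolding fv_dens_def fv_stat_def Let_def stat_support_def p11_eq p21_eq
    by (auto simp: indicator_def)
qed

lemma stat_support_mono: "s \<le> t \<Longrightarrow> stat_support s \<subseteq> stat_support t"
proof -
  assume "s \<le> t"
  then have "decay t \<le> decay s" unfolding decay_def using theta_pos by (simp add: mult_left_mono)
  then have "p11 t \<le> p11 s" "p21 s \<le> p21 t"
    unfolding p11_eq p21_eq using p_less_1 p_pos by (auto intro: mult_left_mono)
  then show ?thesis unfolding stat_support_def by auto
qed

lemma eventually_in_stat_support:
  assumes "\<xi> \<noteq> p"
  shows "eventually (\<lambda>t. \<xi> \<in> stat_support t) at_top"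
proof (cases "\<xi> > p")
  case True
  then show ?thesis
    using order_tendstoD(2)[OF p11_tendsto_p True] by (auto simp: stat_support_def elim: eventually_mono)
next
  case False
  with assms have "\<xi> < p" by simp
  then show ?thesis
    using order_tendstoD(1)[OF p21_tendsto_p \<open>\<xi> < p\<close>] by (auto simp: stat_support_def elim: eventually_mono)
qed

lemma indicator_stat_support_tendsto:
  "(\<lambda>n. indicator (stat_support (real n)) \<xi> * stat \<xi>) \<longlonglongrightarrow> stat \<xi>"
proof (cases "\<xi> = p")
  case False
  have "eventually (\<lambda>n. \<xi> \<in> stat_support (real n)) sequentially"
    using filterlim_iff[THEN iffD1, OF filterlim_real_sequentially, rule_format,
        OF eventually_in_stat_support[OF False]] .
  then have "eventually (\<lambda>n. indicator (stat_support (real n)) \<xi> * stat \<xi> = stat \<xi>) sequentially"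
    by (rule eventually_mono) simp
  then show ?thesis by (rule tendsto_eventually)
qed (simp add: stat_p)

lemma fv_dens_tendsto_stat:
  assumes \<xi>: "\<xi> \<in> {0<..<1} - {p}"
  shows "((\<lambda>t. fv_dens \<theta>1 \<theta>2 x t \<xi>) \<longlongrightarrow> stat \<xi>) at_top"
proof (cases "\<xi> > p")
  case True
  have "eventually (\<lambda>t. \<xi> \<in> stat_support t) at_top"
    using \<xi> eventually_in_stat_support[of \<xi>] by simp
  then have "eventually (\<lambda>t. fv_dens \<theta>1 \<theta>2 x t \<xi> = dens_upper x t \<xi>) at_top"
  proof eventually_elim
    case (elim t)
    then show ?case using True \<xi> p21_less_p[of t] by (auto simp: fv_dens_eq stat_support_def)
  qed
  moreover have "((\<lambda>t. dens_upper x t \<xi>) \<longlongrightarrow> (p + 0 * (x - p) * ((1 - p) / (\<xi> - p))) * (2 / \<theta>)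
      * ((\<xi> - p) / (1 - p)) powr (2 / \<theta> - 1) * (1 / (1 - p))) at_top"
    unfolding dens_upper_def by (intro tendsto_intros decay_tendsto_0)
  ultimately show ?thesis
    using True \<xi> by (simp add: tendsto_cong fv_stat_def Let_def)
next
  case False
  with \<xi> have lower: "\<xi> < p" by simp
  have "eventually (\<lambda>t. \<xi> \<in> stat_support t) at_top"
    using \<xi> eventually_in_stat_support[of \<xi>] by simp
  then have "eventually (\<lambda>t. fv_dens \<theta>1 \<theta>2 x t \<xi> = dens_lower x t \<xi>) at_top"
  proof eventually_elim
    case (elim t)
    then show ?case using lower \<xi> p_less_p11[of t] by (auto simp: fv_dens_eq stat_support_def)
  qed
  moreover have "((\<lambda>t. dens_lower x t \<xi>) \<longlongrightarrow> (1 - p - 0 * (x - p) * inverse (1 - \<xi> / p)) * (2 / \<theta>)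
      * (1 - \<xi> / p) powr (2 / \<theta> - 1) * (1 / p)) at_top"
    unfolding dens_lower_def by (intro tendsto_intros decay_tendsto_0)
  ultimately show ?thesis
    using lower \<xi> by (simp add: tendsto_cong fv_stat_def Let_def)
qed

lemma integral_mix_law_at_p:
  assumes t: "t \<ge> 0" and F[measurable]: "F \<in> borel_measurable borel"
    and B: "\<And>v. v \<in> {0..1} \<Longrightarrow> \<bar>F v\<bar> \<le> B"
  shows "integral\<^sup>L (mix_law p t) F
       = exp (- t) * F p + (\<integral>\<xi>. F \<xi> * (indicator (stat_support t) \<xi> * stat \<xi>) \<partial>lborel)"
    and "integrable lborel (\<lambda>\<xi>. F \<xi> * (indicator (stat_support t) \<xi> * stat \<xi>))"
proof -
  have p: "p \<in> {0..1}" using p_pos p_less_1 by simp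
  show "integral\<^sup>L (mix_law p t) F
      = exp (- t) * F p + (\<integral>\<xi>. F \<xi> * (indicator (stat_support t) \<xi> * stat \<xi>) \<partial>lborel)"
    using integral_mix_law[OF t p F B] integral_mix_density(2)[OF t p F B] by (simp add: fv_dens_at_p)
  show "integrable lborel (\<lambda>\<xi>. F \<xi> * (indicator (stat_support t) \<xi> * stat \<xi>))"
    using integral_mix_density(1)[OF t p F B] by (simp add: fv_dens_at_p)
qed

lemma integral_stat_support:
  assumes t: "t \<ge> 0"
  shows "(\<integral>\<xi>. indicator (stat_support t) \<xi> * stat \<xi> \<partial>lborel) = 1 - exp (- t)"
proof -
  have "p \<in> {0..1}" using p_pos p_less_1 by simp
  then interpret prob_space "mix_law p t" by (rule prob_space_mix_law[OF t])
  show ?thesis using integral_mix_law_at_p(1)[OF t, of "\<lambda>_. 1" 1] prob_space by simp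
qed

lemma nn_integral_stat: "(\<integral>\<^sup>+\<xi>. ennreal (stat \<xi>) \<partial>lborel) = 1"
proof -
  define f where "f n \<xi> = ennreal (indicator (stat_support (real n)) \<xi> * stat \<xi>)" for n \<xi>
  have "incseq f"
    unfolding incseq_def le_fun_def
  proof (intro allI impI)
    fix m n :: nat and \<xi> :: real
    assume "m \<le> n"
    then have "stat_support (real m) \<subseteq> stat_support (real n)" by (intro stat_support_mono) simp
    then show "f m \<xi> \<le> f n \<xi>"
      unfolding f_def using stat_nonneg[of \<xi>] by (auto simp: indicator_def intro!: ennreal_leI)
  qed
  moreover have "f n \<in> borel_measurable lborel" for n
    unfolding f_def by measurable
  moreover have "(\<lambda>n. f n \<xi>) \<longlonglongrightarrow> ennreal (stat \<xi>)" for \<xi>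
    unfolding f_def by (intro tendsto_ennrealI indicator_stat_support_tendsto)
  ultimately have lim: "(\<lambda>n. integral\<^sup>N lborel (f n)) \<longlonglongrightarrow> (\<integral>\<^sup>+\<xi>. ennreal (stat \<xi>) \<partial>lborel)"
    by (rule nn_integral_LIMSEQ)
  have "integral\<^sup>N lborel (f n) = ennreal (1 - exp (- real n))" for n
  proof -
    have "integrable lborel (\<lambda>\<xi>. indicator (stat_support (real n)) \<xi> * stat \<xi>)"
      using integral_mix_law_at_p(2)[of "real n" "\<lambda>_. 1" 1] by simp
    then show ?thesis
      unfolding f_def using stat_nonneg integral_stat_support[of "real n"]
      by (subst nn_integral_eq_integral) (auto simp: indicator_def)
  qed
  moreover have "(\<lambda>n. ennreal (1 - exp (- real n))) \<longlonglongrightarrow> ennreal (1 - 0)"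
    by (intro tendsto_ennrealI tendsto_diff tendsto_const exp_neg_real_tendsto_0)
  ultimately have "(\<lambda>n. integral\<^sup>N lborel (f n)) \<longlonglongrightarrow> 1"
    by simp
  then show ?thesis
    using LIMSEQ_unique[OF lim] by simp
qed

lemma integrable_stat: "integrable lborel stat"
  by (rule integrableI_nonneg) (use stat_nonneg nn_integral_stat in auto)

lemma integral_stat_support_tendsto:
  assumes F[measurable]: "F \<in> borel_measurable borel" and B: "\<And>v. v \<in> {0..1} \<Longrightarrow> \<bar>F v\<bar> \<le> B"
  shows "(\<lambda>n. \<integral>\<xi>. F \<xi> * (indicator (stat_support (real n)) \<xi> * stat \<xi>) \<partial>lborel)
           \<longlonglongrightarrow> (\<integral>\<xi>. F \<xi> * stat \<xi> \<partial>lborel)"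
proof (rule integral_dominated_convergence[where w="\<lambda>\<xi>. B * stat \<xi>"])
  show "AE \<xi> in lborel. norm (F \<xi> * (indicator (stat_support (real n)) \<xi> * stat \<xi>)) \<le> B * stat \<xi>" for n
  proof (rule AE_I2)
    fix \<xi> :: real
    show "norm (F \<xi> * (indicator (stat_support (real n)) \<xi> * stat \<xi>)) \<le> B * stat \<xi>"
    proof (cases "\<xi> \<in> {0..1}")
      case True
      then show ?thesis
        using B[OF True] stat_nonneg[of \<xi>]
        by (auto simp: abs_mult indicator_def intro: mult_right_mono)
    qed (simp add: stat_outside)
  qed
  show "AE \<xi> in lborel. (\<lambda>n. F \<xi> * (indicator (stat_support (real n)) \<xi> * stat \<xi>))
      \<longlonglongrightarrow> F \<xi> * stat \<xi>"
    by (intro AE_I2 tendsto_mult_left indicator_stat_support_tendsto)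
qed (measurable, intro integrable_mult_right integrable_stat)

text \<open>The stationary law is the limit of the laws started at p, and by the forward equation the
  generator integrals of those laws are O(e^{-t}).\<close>

lemma integral_gen_stat:
  assumes g: "\<And>y. (g has_real_derivative dg y) (at y)"
    and dg: "\<And>y. (dg has_real_derivative d2g y) (at y)"
  shows "integral\<^sup>L (density lborel (\<lambda>\<xi>. ennreal (stat \<xi>))) (L g dg) = 0"
proof -
  have cg: "continuous_on UNIV g"
    by (rule DERIV_continuous_on, rule g)
  have cdg: "continuous_on UNIV dg"
    by (rule DERIV_continuous_on, rule dg)
  have [measurable]: "L g dg \<in> borel_measurable borel"
    using continuous_on_gen[OF cg cdg] by (simp add: borel_measurable_continuous_onI)
  obtain B where B: "\<And>v. v \<in> {0..1} \<Longrightarrow> \<bar>L g dg v\<bar> \<le> B"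
    using continuous_bounded_on_unit_interval[OF continuous_on_gen[OF cg cdg]] by blast
  have p: "p \<in> {0..1}" using p_pos p_less_1 by simp
  have "(\<lambda>n. integral\<^sup>L (mix_law p (real n)) (L g dg) - exp (- real n) * L g dg p)
      \<longlonglongrightarrow> (\<integral>\<xi>. L g dg \<xi> * stat \<xi> \<partial>lborel)"
    using integral_stat_support_tendsto[of "L g dg" B] integral_mix_law_at_p(1)[of _ "L g dg" B] B
    by simp
  moreover have "(\<lambda>n. integral\<^sup>L (mix_law p (real n)) (L g dg) - exp (- real n) * L g dg p) \<longlonglongrightarrow> 0"
  proof -
    have "((\<lambda>t. g (p11 t)) \<longlongrightarrow> g p) at_top" "((\<lambda>t. g (p21 t)) \<longlongrightarrow> g p) at_top"
      using DERIV_isCont[OF g] p11_tendsto_p p21_tendsto_p by (auto intro: isCont_tendsto_compose)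
    then have "(\<lambda>n. exp (- real n) * (p * g (p11 (real n)) + (1 - p) * g (p21 (real n)) - chord g p))
        \<longlonglongrightarrow> 0 * (p * g p + (1 - p) * g p - chord g p)"
      by (intro tendsto_intros exp_neg_real_tendsto_0 filterlim_compose[OF _ filterlim_real_sequentially])
    moreover have "integral\<^sup>L (mix_law p (real n)) (L g dg) - exp (- real n) * L g dg p
        = exp (- real n) * (p * g (p11 (real n)) + (1 - p) * g (p21 (real n)) - chord g p)" for n
      using integral_mix_law_gen[OF _ p g cdg, of "real n"] by (simp add: algebra_simps)
    ultimately show ?thesis by simp
  qed
  ultimately have "(\<integral>\<xi>. L g dg \<xi> * stat \<xi> \<partial>lborel) = 0" using LIMSEQ_unique by auto
  then show ?thesis
    using stat_nonneg by (subst integral_density) (auto simp: mult.commute)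
qed

lemma stat_evolution: "fv_evolution \<theta>1 \<theta>2 (\<lambda>t. density lborel (\<lambda>\<xi>. ennreal (stat \<xi>)))"
proof -
  let ?\<pi> = "density lborel (\<lambda>\<xi>. ennreal (stat \<xi>))"
  have "emeasure ?\<pi> {0..1} = (\<integral>\<^sup>+\<xi>. ennreal (stat \<xi>) \<partial>lborel)"
    by (subst emeasure_density) (auto intro!: nn_integral_cong simp: indicator_def stat_outside)
  then have unit: "emeasure ?\<pi> {0..1} = 1" "prob_space ?\<pi>"
    using nn_integral_stat by (auto intro!: prob_spaceI simp: emeasure_density)
  show ?thesis
    unfolding fv_evolution_def
  proof (intro conjI allI impI)
    fix t :: real
    show "sets ?\<pi> = sets borel" "prob_space ?\<pi>" "emeasure ?\<pi> {0..1} = 1" using unit by simp_all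
  next
    fix g dg d2g :: "real \<Rightarrow> real" and t :: real
    assume "(\<forall>y. (g has_real_derivative dg y) (at y)) \<and> (\<forall>y. (dg has_real_derivative d2g y) (at y))
      \<and> continuous_on UNIV d2g"
    then have "integral\<^sup>L ?\<pi> (L g dg) = 0" by (intro integral_gen_stat) auto
    then show "((\<lambda>s. \<integral>y. g y \<partial>?\<pi>) has_real_derivative (\<integral>y. L g dg y \<partial>?\<pi>)) (at t within {0..})"
      by simp
  qed
qed

end

theorem theorem1:
  fixes \<theta>1 \<theta>2 x :: real and P :: "real \<Rightarrow> real measure"
  assumes "\<theta>1 > 0" and "\<theta>2 > 0" and "x \<in> {0..1}"
    and "\<forall>t\<ge>0. sets (P t) = sets borel"
  shows "(fv_law \<theta>1 \<theta>2 x P \<longleftrightarrow>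
            (\<forall>t\<ge>0. \<forall>A\<in>sets borel. emeasure (P t) A = ennreal (fv_mix \<theta>1 \<theta>2 x t A)))
       \<and> (\<forall>t>0. \<forall>A\<in>sets borel.
            fv_mix \<theta>1 \<theta>2 x t A = exp (- t) * indicator A (fv_q1 \<theta>1 \<theta>2 t x)
                               + (LBINT \<xi>:A. fv_dens \<theta>1 \<theta>2 x t \<xi>))
       \<and> (\<forall>\<xi>\<in>{0<..<1} - {fv_p \<theta>1 \<theta>2}.
            ((\<lambda>t. fv_dens \<theta>1 \<theta>2 x t \<xi>) \<longlongrightarrow> fv_stat \<theta>1 \<theta>2 \<xi>) at_top)
       \<and> fv_evolution \<theta>1 \<theta>2 (\<lambda>t. density lborel (\<lambda>\<xi>. ennreal (fv_stat \<theta>1 \<theta>2 \<xi>)))"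
proof -
  interpret fleming_viot \<theta>1 \<theta>2 using assms(1,2) by unfold_locales
  show ?thesis
    using fv_law_iff_mix[OF assms(3,4)] fv_mix_eq_density[OF assms(3)] fv_dens_tendsto_stat
      stat_evolution by blast
qed

end
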